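(* Let $\mathcal{H}$ be a real Hilbert space, let $A\colon \mathcal{H}\rightrightarrows\mathcal{H}$ be maximally monotone, let $B\colon \mathcal{H}\to\mathcal{H}$ be monotone and $L$-Lipschitz continuous, and suppose that $(A+B)^{-1}(0)\neq\varnothing$. Suppose $(\lambda_k)_{k\geq -1}\subseteq\left[\varepsilon,\frac{1-2\varepsilon}{2L}\right]$ for some $\varepsilon>0$. Given $x_0,x_{-1}\in\mathcal{H}$, define the sequence $(x_k)$ by $$x_{k+1} = J_{\lambda_k A}\bigl(x_k - \lambda_k B(x_k) - \lambda_{k-1}(B(x_k)-B(x_{k-1})) \bigr) \quad\forall k\in\mathbb{N}=\{0,1,2,\dots\}.$$ Then $(x_k)$ converges weakly to a point contained in $(A+B)^{-1}(0)=\{x\in\mathcal{H}: 0\in A(x)+B(x)\}$.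
   Context: For a maximally monotone operator $A$ and $\lambda>0$, the resolvent is $J_{\lambda A}:=(I+\lambda A)^{-1}$, which is single-valued and defined everywhere on $\mathcal{H}$. An operator $B$ is monotone if $\langle x-y,B(x)-B(y)\rangle\geq 0$ for all $x,y$, and $L$-Lipschitz if $\|B(x)-B(y)\|\leq L\|x-y\|$ for all $x,y$. *)

theory Defs
  imports "HOL-Analysis.Analysis"
begin

definition monotone_op :: "('a::real_inner \<Rightarrow> 'a set) \<Rightarrow> bool" where
  "monotone_op A \<longleftrightarrow> (\<forall>x y u v. u \<in> A x \<longrightarrow> v \<in> A y \<longrightarrow> 0 \<le> inner (x - y) (u - v))"

definition maximally_monotone :: "('a::real_inner \<Rightarrow> 'a set) \<Rightarrow> bool" where
  "maximally_monotone A \<longleftrightarrow> monotone_op A \<and>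
     (\<forall>A'. monotone_op A' \<and> (\<forall>x. A x \<subseteq> A' x) \<longrightarrow> A' = A)"

definition monotone_single :: "('a::real_inner \<Rightarrow> 'a) \<Rightarrow> bool" where
  "monotone_single B \<longleftrightarrow> (\<forall>x y. 0 \<le> inner (x - y) (B x - B y))"

text \<open>Resolvent J_{lam A} z = (I + lam A)^{-1} z: the point x with z \<in> x + lam A(x).\<close>
definition resolvent :: "real \<Rightarrow> ('a::real_inner \<Rightarrow> 'a set) \<Rightarrow> 'a \<Rightarrow> 'a" where
  "resolvent lam A z = (THE x. z \<in> (\<lambda>u. x + lam *\<^sub>R u) ` A x)"

definition weakly_converges_to :: "(nat \<Rightarrow> 'a::real_inner) \<Rightarrow> 'a \<Rightarrow> bool" where
  "weakly_converges_to x p \<longleftrightarrow> (\<forall>y. (\<lambda>k. inner (x k) y) \<longlonglongrightarrow> inner p y)"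

definition zeros_sum :: "('a::real_vector \<Rightarrow> 'a set) \<Rightarrow> ('a \<Rightarrow> 'a) \<Rightarrow> 'a set" where
  "zeros_sum A B = {x. \<exists>a\<in>A x. a + B x = 0}"

end

theory Submission
  imports Defs "HOL-Library.Diagonal_Subsequence"
begin

text \<open>Fix a zero \<open>s\<close> of \<open>A + B\<close>. Monotonicity of \<open>A\<close> and \<open>B\<close> and the Lipschitz bound on the reflected
  term \<open>\<lambda>\<^sub>k\<^sub>-\<^sub>1(Bx\<^sub>k - Bx\<^sub>k\<^sub>-\<^sub>1)\<close> show that
  \<open>\<parallel>x\<^sub>k - s\<parallel>\<^sup>2 - 2\<lambda>\<^sub>k\<^sub>-\<^sub>1\<langle>x\<^sub>k - s, Bx\<^sub>k - Bx\<^sub>k\<^sub>-\<^sub>1\<rangle> + \<lambda>\<^sub>k\<^sub>-\<^sub>1L\<parallel>x\<^sub>k - x\<^sub>k\<^sub>-\<^sub>1\<parallel>\<^sup>2\<close>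
  decreases by at least \<open>2\<epsilon>\<parallel>x\<^sub>k\<^sub>+\<^sub>1 - x\<^sub>k\<parallel>\<^sup>2\<close> per step and dominates \<open>\<parallel>x\<^sub>k - s\<parallel>\<^sup>2/2\<close>. Hence the steps
  tend to \<open>0\<close> and \<open>\<parallel>x\<^sub>k - s\<parallel>\<close> converges for every zero \<open>s\<close>. The update puts \<open>x\<^sub>k\<^sub>+\<^sub>1\<close> in the graph
  of \<open>A + B\<close> up to a residual that vanishes with the steps; as \<open>A + B\<close> is maximally monotone its graph
  is closed for weak-strong limits, so every weak cluster point is a zero, and Opial's lemma gives weak
  convergence of the whole sequence.

  Two facts from Hilbert space theory enter: bounded sequences have weakly convergent subsequences
  (a diagonal argument and the Riesz representation), and resolvents of maximally monotone operators
  are everywhere defined (Minty). The latter rests on the Debrunner--Flor extension of monotone sets: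
  for finitely many pairs, minimise the largest of their quadratic defects over the convex hull of the
  centres; in general, use the finite intersection property of closed bounded convex sets.\<close>

section \<open>Geometry of Hilbert spaces\<close>

lemma parallelogram_law_midpoint:
  fixes u v :: "'a::real_inner"
  shows "norm (u - v)^2 = 2 * norm u^2 + 2 * norm v^2 - 4 * norm ((1/2) *\<^sub>R (u + v))^2"
  by (simp add: power2_norm_eq_inner inner_simps algebra_simps)

lemma Cauchy_if_norm_diff_sq_le:
  fixes f :: "nat \<Rightarrow> 'a::real_normed_vector"
  assumes "c \<ge> 0" and "\<And>m n. m \<le> n \<Longrightarrow> norm (f m - f n)^2 \<le> c * inverse (real (Suc m))"
  shows "Cauchy f"
proof (rule metric_CauchyI)
  fix e :: real
  assume "e > 0"
  obtain N :: nat where N: "c / e^2 < real N"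
    using reals_Archimedean2 by blast
  have "c < e^2 * real (Suc N)"
  proof -
    have "c < e^2 * real N"
      using N \<open>e > 0\<close> by (simp add: divide_less_eq mult.commute)
    also have "\<dots> \<le> e^2 * real (Suc N)"
      by (intro mult_left_mono) auto
    finally show ?thesis .
  qed
  have small: "norm (f m - f n)^2 < e^2" if "N \<le> m" "m \<le> n" for m n
  proof -
    have "c * inverse (real (Suc m)) \<le> c * inverse (real (Suc N))"
      using that \<open>c \<ge> 0\<close> by (intro mult_left_mono) (auto simp: field_simps)
    also have "\<dots> < e^2"
      using \<open>c < e^2 * real (Suc N)\<close> by (simp add: field_simps)
    finally show ?thesis
      using assms(2)[OF \<open>m \<le> n\<close>] by linarith
  qed
  have "dist (f m) (f n) < e" if "N \<le> m" "N \<le> n" for m n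
  proof -
    have "norm (f m - f n)^2 < e^2"
      using small[of m n] small[of n m] that by (cases "m \<le> n") (auto simp: norm_minus_commute)
    then show ?thesis
      using \<open>e > 0\<close> by (simp add: dist_norm power_less_imp_less_base)
  qed
  then show "\<exists>M. \<forall>m\<ge>M. \<forall>n\<ge>M. dist (f m) (f n) < e"
    by blast
qed

lemma convex_minimising_sequence_Cauchy:
  fixes C :: "'a::real_inner set"
  assumes "convex C" and cs: "\<And>n. cs n \<in> C" and d_le: "\<And>c. c \<in> C \<Longrightarrow> d \<le> norm (y - c)^2"
    and close: "\<And>n. norm (y - cs n)^2 < d + inverse (real (Suc n))"
  shows "Cauchy cs"
proof (rule Cauchy_if_norm_diff_sq_le[of 4])
  fix m n :: nat
  assume "m \<le> n"
  have "(1/2) *\<^sub>R (cs m + cs n) \<in> C"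
    using convexD[OF \<open>convex C\<close> cs cs, of "1/2" "1/2" m n] by (simp add: scaleR_add_right)
  moreover have "y - (1/2) *\<^sub>R (cs m + cs n) = (1/2) *\<^sub>R ((y - cs n) + (y - cs m))"
    by (simp add: algebra_simps flip: scaleR_add_left)
  ultimately have "d \<le> norm ((1/2) *\<^sub>R ((y - cs n) + (y - cs m)))^2"
    by (metis d_le)
  moreover have "inverse (real (Suc n)) \<le> inverse (real (Suc m))"
    using \<open>m \<le> n\<close> by (simp add: field_simps)
  moreover have "norm (cs m - cs n)^2 = norm ((y - cs n) - (y - cs m))^2"
    by (simp add: norm_minus_commute)
  ultimately show "norm (cs m - cs n)^2 \<le> 4 * inverse (real (Suc m))"
    using parallelogram_law_midpoint[of "y - cs n" "y - cs m"] close[of m] close[of n]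
    by linarith
qed simp

lemma closed_convex_nearest_point_exists:
  fixes C :: "'a::{real_inner,complete_space} set"
  assumes "closed C" and "convex C" and "C \<noteq> {}"
  shows "\<exists>q\<in>C. \<forall>c\<in>C. norm (y - q) \<le> norm (y - c)"
proof -
  define d where "d = (INF c\<in>C. norm (y - c)^2)"
  have bdd: "bdd_below ((\<lambda>c. norm (y - c)^2) ` C)"
    by (rule bdd_belowI[of _ 0]) auto
  have d_le: "d \<le> norm (y - c)^2" if "c \<in> C" for c
    unfolding d_def by (rule cINF_lower[OF bdd that])
  have "\<exists>c\<in>C. norm (y - c)^2 < d + inverse (real (Suc n))" for n
    using cINF_less_iff[OF \<open>C \<noteq> {}\<close> bdd, of "d + inverse (real (Suc n))"] by (simp add: d_def)
  then obtain cs where cs: "\<And>n. cs n \<in> C" "\<And>n. norm (y - cs n)^2 < d + inverse (real (Suc n))"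
    by metis
  have "Cauchy cs"
    by (rule convex_minimising_sequence_Cauchy[OF \<open>convex C\<close> cs(1) d_le cs(2)])
  then obtain q where q: "cs \<longlonglongrightarrow> q"
    using Cauchy_convergent_iff convergent_def by blast
  have "q \<in> C"
    using \<open>closed C\<close> q cs(1) closed_sequential_limits by blast
  have "norm (y - q)^2 \<le> d"
  proof (rule LIMSEQ_le)
    show "(\<lambda>n. norm (y - cs n)^2) \<longlonglongrightarrow> norm (y - q)^2"
      by (intro tendsto_intros q)
    show "(\<lambda>n. d + inverse (real (Suc n))) \<longlonglongrightarrow> d"
      using tendsto_add[OF tendsto_const LIMSEQ_inverse_real_of_nat, of d] by simp
    show "\<exists>N. \<forall>n\<ge>N. norm (y - cs n)^2 \<le> d + inverse (real (Suc n))"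
      using cs(2) less_imp_le by blast
  qed
  then have "norm (y - q) \<le> norm (y - c)" if "c \<in> C" for c
    using d_le[OF that] by (simp add: power2_le_imp_le)
  with \<open>q \<in> C\<close> show ?thesis
    by blast
qed

lemma nearest_point_inner_le:
  fixes C :: "'a::real_inner set"
  assumes "convex C" and "q \<in> C" and nearest: "\<forall>c\<in>C. norm (y - q) \<le> norm (y - c)" and "c \<in> C"
  shows "inner (y - q) (c - q) \<le> 0"
proof (rule ccontr)
  define e where "e = c - q"
  define \<delta> where "\<delta> = inner (y - q) e"
  assume "\<not> ?thesis"
  then have "\<delta> > 0" "e \<noteq> 0"
    by (auto simp: \<delta>_def e_def)
  define s where "s = min 1 (\<delta> / norm e^2)"
  have s: "0 < s" "s \<le> 1" "s * norm e^2 \<le> \<delta>"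
    using \<open>\<delta> > 0\<close> \<open>e \<noteq> 0\<close> by (auto simp: s_def min_def field_simps)
  have inC: "(1 - s) *\<^sub>R q + s *\<^sub>R c \<in> C"
    using convexD_alt[OF \<open>convex C\<close> \<open>q \<in> C\<close> \<open>c \<in> C\<close>, of s] s by simp
  have "y - ((1 - s) *\<^sub>R q + s *\<^sub>R c) = (y - q) - s *\<^sub>R e"
    by (simp add: e_def algebra_simps)
  moreover have "norm ((y - q) - s *\<^sub>R e)^2 = norm (y - q)^2 - 2 * s * \<delta> + s * (s * norm e^2)"
    by (simp add: power2_norm_eq_inner inner_simps \<delta>_def algebra_simps inner_commute)
  ultimately have "norm (y - ((1 - s) *\<^sub>R q + s *\<^sub>R c))^2 = norm (y - q)^2 - 2 * s * \<delta> + s * (s * norm e^2)"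
    by (simp only:)
  also have "\<dots> < norm (y - q)^2"
  proof -
    have "s * (s * norm e^2) \<le> s * \<delta>"
      using s by (simp add: mult_left_mono)
    moreover have "s * \<delta> > 0"
      using s \<open>\<delta> > 0\<close> by simp
    ultimately show ?thesis
      by linarith
  qed
  finally have "norm (y - ((1 - s) *\<^sub>R q + s *\<^sub>R c)) < norm (y - q)"
    by (rule power_less_imp_less_base) simp
  then show False
    using nearest inC by fastforce
qed

lemma min_norm_point_dist_le:
  fixes K :: "'a::real_inner set"
  assumes "convex K" and "q \<in> K" and "\<forall>c\<in>K. norm q \<le> norm c" and "x \<in> K"
  shows "norm (x - q)^2 \<le> norm x^2 - norm q^2"
proof -
  have "inner (0 - q) (x - q) \<le> 0"
    using nearest_point_inner_le[of K q 0 x] assms by simp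
  then show ?thesis
    by (simp add: power2_norm_eq_inner inner_simps inner_commute)
qed

lemma closed_subspace_orthogonal_projection:
  fixes D :: "'a::{real_inner,complete_space} set"
  assumes "closed D" and "subspace D"
  shows "\<exists>q\<in>D. \<forall>m\<in>D. inner (y - q) m = 0"
proof -
  have "convex D" "D \<noteq> {}"
    using \<open>subspace D\<close> subspace_imp_convex subspace_0 by blast+
  then obtain q where "q \<in> D" and nearest: "\<forall>c\<in>D. norm (y - q) \<le> norm (y - c)"
    using closed_convex_nearest_point_exists \<open>closed D\<close> by blast
  have "inner (y - q) m = 0" if "m \<in> D" for m
  proof -
    have "q + m \<in> D" "q - m \<in> D"
      using \<open>q \<in> D\<close> that \<open>subspace D\<close> by (auto simp: subspace_add subspace_diff)
    then have "inner (y - q) m \<le> 0" "inner (y - q) (- m) \<le> 0"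
      using nearest_point_inner_le[OF \<open>convex D\<close> \<open>q \<in> D\<close> nearest] by fastforce+
    then show ?thesis
      by simp
  qed
  with \<open>q \<in> D\<close> show ?thesis
    by blast
qed

lemma Riesz_representation:
  fixes f :: "'a::{real_inner,complete_space} \<Rightarrow> real"
  assumes "bounded_linear f"
  shows "\<exists>p. \<forall>y. f y = inner p y"
proof (cases "\<forall>y. f y = 0")
  case True
  then show ?thesis
    by (intro exI[of _ 0]) simp
next
  case False
  then obtain y0 where "f y0 \<noteq> 0"
    by blast
  interpret f: bounded_linear f
    by fact
  define N where "N = {y. f y = 0}"
  have "subspace N"
    unfolding subspace_def N_def by (simp add: f.zero f.add f.scale)
  moreover have "closed N"
    unfolding N_def by (intro closed_Collect_eq continuous_on_const linear_continuous_on assms)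
  ultimately obtain q where "q \<in> N" and orth: "\<And>m. m \<in> N \<Longrightarrow> inner (y0 - q) m = 0"
    using closed_subspace_orthogonal_projection by blast
  define e where "e = y0 - q"
  have fe: "f e = f y0"
    using \<open>q \<in> N\<close> by (simp add: e_def N_def f.diff)
  then have "inner e e > 0"
    using \<open>f y0 \<noteq> 0\<close> by (metis f.zero inner_gt_zero_iff)
  have "f y = inner ((f e / inner e e) *\<^sub>R e) y" for y
  proof -
    have "y - (f y / f e) *\<^sub>R e \<in> N"
      using fe \<open>f y0 \<noteq> 0\<close> by (simp add: N_def f.diff f.scale)
    then have "inner e y = (f y / f e) * inner e e"
      using orth by (fastforce simp: e_def inner_diff_right)
    then show ?thesis
      using \<open>inner e e > 0\<close> fe \<open>f y0 \<noteq> 0\<close> by (simp add: field_simps)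
  qed
  then show ?thesis
    by blast
qed

section \<open>Weak convergence\<close>

lemma LIMSEQ_if_subseq_subseq_LIMSEQ:
  fixes f :: "nat \<Rightarrow> 'a::metric_space"
  assumes "\<And>r :: nat \<Rightarrow> nat. strict_mono r \<Longrightarrow> \<exists>r' :: nat \<Rightarrow> nat. strict_mono r' \<and> (f \<circ> r \<circ> r') \<longlonglongrightarrow> l"
  shows "f \<longlonglongrightarrow> l"
proof (rule ccontr)
  assume "\<not> f \<longlonglongrightarrow> l"
  then obtain e where "e > 0" and "\<forall>N. \<exists>n\<ge>N. e \<le> dist (f n) l"
    unfolding LIMSEQ_def by (auto simp: not_less)
  then have "infinite {n. e \<le> dist (f n) l}"
    unfolding infinite_nat_iff_unbounded_le by blast
  then obtain r :: "nat \<Rightarrow> nat" where "strict_mono r" and far: "\<And>n. e \<le> dist (f (r n)) l"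
    using infinite_enumerate by blast
  then obtain r' where "(f \<circ> r \<circ> r') \<longlonglongrightarrow> l"
    using assms by blast
  then obtain N where "dist (f (r (r' N))) l < e"
    using \<open>e > 0\<close> unfolding LIMSEQ_def by auto
  with far show False
    using not_less by blast
qed

lemma weakly_converges_to_if_subseq_subseq:
  assumes "\<And>r :: nat \<Rightarrow> nat. strict_mono r \<Longrightarrow>
      \<exists>r' :: nat \<Rightarrow> nat. strict_mono r' \<and> weakly_converges_to (x \<circ> r \<circ> r') p"
  shows "weakly_converges_to x p"
  unfolding weakly_converges_to_def
proof
  fix y
  show "(\<lambda>n. inner (x n) y) \<longlonglongrightarrow> inner p y"
  proof (rule LIMSEQ_if_subseq_subseq_LIMSEQ)
    fix r :: "nat \<Rightarrow> nat"
    assume "strict_mono r"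
    then obtain r' where "strict_mono r'" "weakly_converges_to (x \<circ> r \<circ> r') p"
      using assms by blast
    then show "\<exists>r'. strict_mono r' \<and> ((\<lambda>n. inner (x n) y) \<circ> r \<circ> r') \<longlonglongrightarrow> inner p y"
      unfolding weakly_converges_to_def by (auto simp: o_def)
  qed
qed

lemma bounded_subseq_inner_convergent_on_terms:
  fixes x :: "nat \<Rightarrow> 'a::real_inner"
  assumes "bounded (range x)"
  shows "\<exists>r. strict_mono r \<and> (\<forall>k. convergent (\<lambda>j. inner (x (r j)) (x k)))"
proof -
  obtain C where C: "\<And>n. norm (x n) \<le> C"
    using assms by (auto simp: bounded_iff)
  define P where "P k r \<longleftrightarrow> convergent (\<lambda>j. inner (x (r j)) (x k))" for k and r :: "nat \<Rightarrow> nat"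
  interpret subseqs P
  proof
    fix k and s :: "nat \<Rightarrow> nat"
    have "\<bar>inner (x (s j)) (x k)\<bar> \<le> C * norm (x k)" for j
      using Cauchy_Schwarz_ineq2[of "x (s j)" "x k"] C[of "s j"]
      by (meson mult_right_mono norm_ge_zero order_trans)
    then have "bounded (range (\<lambda>j. inner (x (s j)) (x k)))"
      unfolding bounded_iff by auto
    then obtain l r where "strict_mono r" "((\<lambda>j. inner (x (s j)) (x k)) \<circ> r) \<longlonglongrightarrow> l"
      using bounded_imp_convergent_subsequence by blast
    then show "\<exists>r. strict_mono r \<and> P k (s \<circ> r)"
      unfolding P_def convergent_def by (auto simp: o_def)
  qed
  have "convergent (\<lambda>j. inner (x (diagseq j)) (x k))" for k
  proof -
    have "P k (diagseq \<circ> ((+) (Suc k)))"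
    proof (rule diagseq_holds)
      fix r s n
      assume "strict_mono (r :: nat \<Rightarrow> nat)" "P n s"
      then show "P n (s \<circ> r)"
        unfolding P_def using convergent_subseq_convergent[of _ r] by (auto simp: o_def)
    qed
    then obtain l where "(\<lambda>j. inner (x (diagseq (j + Suc k))) (x k)) \<longlonglongrightarrow> l"
      by (auto simp: P_def convergent_def o_def add.commute)
    then have "(\<lambda>j. inner (x (diagseq j)) (x k)) \<longlonglongrightarrow> l"
      by (rule LIMSEQ_offset)
    then show ?thesis
      unfolding convergent_def by blast
  qed
  then show ?thesis
    using subseq_diagseq by blast
qed

lemma closed_inner_convergent:
  fixes z :: "nat \<Rightarrow> 'a::real_inner"
  assumes "bounded (range z)"
  shows "closed {y. convergent (\<lambda>j. inner (z j) y)}"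
  unfolding closed_sequential_limits
proof (intro allI impI, elim conjE)
  fix ys y
  assume ys: "\<forall>n. ys n \<in> {y. convergent (\<lambda>j. inner (z j) y)}" and "ys \<longlonglongrightarrow> y"
  obtain C where "C > 0" and C: "\<And>n. norm (z n) \<le> C"
    using assms by (auto simp: bounded_pos)
  have z_inner_le: "\<bar>inner (z n) y\<bar> \<le> C * norm y" for n y
    using Cauchy_Schwarz_ineq2[of "z n" y] C[of n] by (meson mult_right_mono norm_ge_zero order_trans)
  have "Cauchy (\<lambda>j. inner (z j) y)"
  proof (rule metric_CauchyI)
    fix e :: real
    assume "e > 0"
    then obtain K where "\<forall>n\<ge>K. norm (ys n - y) < e / (3 * C)"
      using \<open>ys \<longlonglongrightarrow> y\<close> \<open>C > 0\<close> unfolding LIMSEQ_iff by (meson divide_pos_pos mult_pos_pos zero_less_numeral)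
    then have "C * norm (y - ys K) < e / 3"
      using \<open>C > 0\<close> by (simp add: field_simps norm_minus_commute)
    then have near: "\<bar>inner (z i) (y - ys K)\<bar> < e / 3" for i
      using z_inner_le[of i "y - ys K"] by linarith
    have "Cauchy (\<lambda>j. inner (z j) (ys K))"
      using ys by (simp add: Cauchy_convergent_iff)
    moreover have "e / 3 > 0"
      using \<open>e > 0\<close> by simp
    ultimately obtain N where N: "\<forall>m\<ge>N. \<forall>n\<ge>N. dist (inner (z m) (ys K)) (inner (z n) (ys K)) < e / 3"
      unfolding Cauchy_def by blast
    have "dist (inner (z m) y) (inner (z n) y) < e" if "N \<le> m" "N \<le> n" for m n
    proof -
      have "\<bar>inner (z m) (ys K) - inner (z n) (ys K)\<bar> < e / 3"
        using N that by (simp add: dist_real_def)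
      moreover have "inner (z m) y - inner (z n) y
          = inner (z m) (y - ys K) - inner (z n) (y - ys K) + (inner (z m) (ys K) - inner (z n) (ys K))"
        by (simp add: inner_diff_right)
      ultimately show ?thesis
        using near[of m] near[of n] unfolding dist_real_def by linarith
    qed
    then show "\<exists>M. \<forall>m\<ge>M. \<forall>n\<ge>M. dist (inner (z m) y) (inner (z n) y) < e"
      by blast
  qed
  then show "y \<in> {y. convergent (\<lambda>j. inner (z j) y)}"
    by (simp add: Cauchy_convergent_iff)
qed

lemma inner_convergent_if_convergent_on_terms:
  fixes z :: "nat \<Rightarrow> 'a::{real_inner,complete_space}"
  assumes "bounded (range z)" and terms: "\<And>k. convergent (\<lambda>j. inner (z j) (z k))"
  shows "convergent (\<lambda>j. inner (z j) y)"
proof -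
  define D where "D = {y. convergent (\<lambda>j. inner (z j) y)}"
  have "subspace D"
    unfolding subspace_def D_def
    by (simp add: inner_add_right convergent_add convergent_mult convergent_const)
  moreover have "closed D"
    unfolding D_def using assms(1) by (rule closed_inner_convergent)
  ultimately obtain q where "q \<in> D" and orth: "\<And>m. m \<in> D \<Longrightarrow> inner (y - q) m = 0"
    using closed_subspace_orthogonal_projection by blast
  have "inner (z j) (y - q) = 0" for j
    using orth[of "z j"] terms by (simp add: D_def inner_commute)
  then have "y - q \<in> D"
    by (simp add: D_def convergent_const)
  then have "q + (y - q) \<in> D"
    using \<open>q \<in> D\<close> \<open>subspace D\<close> subspace_add by blast
  then show ?thesis
    by (simp add: D_def)
qed

lemma weakly_convergent_if_inner_convergent:
  fixes z :: "nat \<Rightarrow> 'a::{real_inner,complete_space}"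
  assumes "bounded (range z)" and conv: "\<And>y. convergent (\<lambda>j. inner (z j) y)"
  shows "\<exists>p. weakly_converges_to z p"
proof -
  obtain C where C: "\<And>n. norm (z n) \<le> C"
    using assms by (auto simp: bounded_iff)
  define f where "f y = lim (\<lambda>j. inner (z j) y)" for y
  have f: "(\<lambda>j. inner (z j) y) \<longlonglongrightarrow> f y" for y
    using conv by (simp add: f_def convergent_LIMSEQ_iff)
  have "bounded_linear f"
  proof (rule bounded_linear_intro)
    show "f (a + b) = f a + f b" for a b
      using f[of "a + b"] tendsto_add[OF f f] by (simp add: inner_add_right LIMSEQ_unique)
    show "f (c *\<^sub>R a) = c *\<^sub>R f a" for c a
      using f[of "c *\<^sub>R a"] tendsto_mult_left[OF f, of c] by (simp add: LIMSEQ_unique)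
    show "norm (f y) \<le> norm y * C" for y
    proof (rule LIMSEQ_le_const2)
      show "(\<lambda>j. norm (inner (z j) y)) \<longlonglongrightarrow> norm (f y)"
        by (intro tendsto_intros f)
      have "norm (inner (z j) y) \<le> norm y * C" for j
      proof -
        have "norm (z j) * norm y \<le> C * norm y"
          using C[of j] by (rule mult_right_mono) simp
        then show ?thesis
          using Cauchy_Schwarz_ineq2[of "z j" y] by (simp add: mult.commute)
      qed
      then show "\<exists>N. \<forall>j\<ge>N. norm (inner (z j) y) \<le> norm y * C"
        by blast
    qed
  qed
  then obtain p where "\<And>y. f y = inner p y"
    using Riesz_representation by blast
  then show ?thesis
    using f unfolding weakly_converges_to_def by auto
qed

lemma bounded_imp_weakly_convergent_subseq:
  fixes x :: "nat \<Rightarrow> 'a::{real_inner,complete_space}"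
  assumes "bounded (range x)"
  shows "\<exists>r p. strict_mono r \<and> weakly_converges_to (x \<circ> r) p"
proof -
  obtain r where "strict_mono r" and r: "\<And>k. convergent (\<lambda>j. inner (x (r j)) (x k))"
    using bounded_subseq_inner_convergent_on_terms[OF assms] by blast
  have "bounded (range (x \<circ> r))"
    using assms by (rule bounded_subset) auto
  moreover have "convergent (\<lambda>j. inner ((x \<circ> r) j) y)" for y
    using inner_convergent_if_convergent_on_terms[OF \<open>bounded (range (x \<circ> r))\<close>] r by simp
  ultimately show ?thesis
    using weakly_convergent_if_inner_convergent \<open>strict_mono r\<close> by blast
qed

lemma weak_subseq_limits_eq_if_dist_convergent:
  fixes x :: "nat \<Rightarrow> 'a::real_inner"
  assumes "convergent (\<lambda>n. norm (x n - p))" and "convergent (\<lambda>n. norm (x n - q))"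
    and "strict_mono rp" and "weakly_converges_to (x \<circ> rp) p"
    and "strict_mono rq" and "weakly_converges_to (x \<circ> rq) q"
  shows "p = q"
proof -
  \<comment> \<open>polarisation: \<open>\<langle>x n, p - q\<rangle>\<close> is a combination of the convergent \<open>\<parallel>x n - p\<parallel>\<^sup>2\<close> and \<open>\<parallel>x n - q\<parallel>\<^sup>2\<close>\<close>
  have polar: "inner (x n) (p - q) = (norm (x n - q)^2 - norm (x n - p)^2 - norm q^2 + norm p^2) / 2" for n
    by (simp add: power2_norm_eq_inner inner_simps inner_commute algebra_simps)
  obtain dp dq where "(\<lambda>n. norm (x n - p)) \<longlonglongrightarrow> dp" "(\<lambda>n. norm (x n - q)) \<longlonglongrightarrow> dq"
    using assms(1,2) unfolding convergent_def by blast
  then have l: "(\<lambda>n. inner (x n) (p - q)) \<longlonglongrightarrow> (dq^2 - dp^2 - norm q^2 + norm p^2) / 2"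
    unfolding polar by (intro tendsto_intros) auto
  have "(\<lambda>j. inner (x (rp j)) (p - q)) \<longlonglongrightarrow> inner p (p - q)"
    "(\<lambda>j. inner (x (rq j)) (p - q)) \<longlonglongrightarrow> inner q (p - q)"
    using assms(4,6) unfolding weakly_converges_to_def by auto
  moreover have "(\<lambda>j. inner (x (rp j)) (p - q)) \<longlonglongrightarrow> (dq^2 - dp^2 - norm q^2 + norm p^2) / 2"
    "(\<lambda>j. inner (x (rq j)) (p - q)) \<longlonglongrightarrow> (dq^2 - dp^2 - norm q^2 + norm p^2) / 2"
    using LIMSEQ_subseq_LIMSEQ[OF l \<open>strict_mono rp\<close>] LIMSEQ_subseq_LIMSEQ[OF l \<open>strict_mono rq\<close>]
    by (simp_all add: o_def)
  ultimately have "inner p (p - q) = inner q (p - q)"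
    by (metis LIMSEQ_unique)
  then have "inner (p - q) (p - q) = 0"
    by (simp add: inner_diff_left)
  then show ?thesis
    by simp
qed

lemma Opial:
  fixes x :: "nat \<Rightarrow> 'a::{real_inner,complete_space}"
  assumes "S \<noteq> {}"
    and dist_convergent: "\<And>s. s \<in> S \<Longrightarrow> convergent (\<lambda>n. norm (x n - s))"
    and cluster: "\<And>r q. strict_mono r \<Longrightarrow> weakly_converges_to (x \<circ> r) q \<Longrightarrow> q \<in> S"
  shows "\<exists>p\<in>S. weakly_converges_to x p"
proof -
  obtain s0 where "s0 \<in> S"
    using \<open>S \<noteq> {}\<close> by blast
  then have "Bseq (\<lambda>n. norm (x n - s0))"
    using dist_convergent convergent_imp_Bseq by blast
  then obtain K where K: "\<And>n. norm (norm (x n - s0)) \<le> K"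
    by (metis BseqE)
  have "norm (x n) \<le> K + norm s0" for n
    using K[of n] norm_triangle_sub[of "x n" s0] by simp
  then have bounded: "bounded (range (x \<circ> r))" for r :: "nat \<Rightarrow> nat"
    unfolding bounded_iff by auto
  have subseq_cluster: "\<exists>r' q. strict_mono r' \<and> q \<in> S \<and> weakly_converges_to (x \<circ> r \<circ> r') q"
    if "strict_mono r" for r :: "nat \<Rightarrow> nat"
  proof -
    obtain r' q where "strict_mono r'" "weakly_converges_to (x \<circ> r \<circ> r') q"
      using bounded_imp_weakly_convergent_subseq[OF bounded[of r]] by blast
    moreover have "q \<in> S"
      using cluster[OF strict_mono_o[OF that \<open>strict_mono r'\<close>]] calculation by (simp add: o_assoc)
    ultimately show ?thesis
      by blast
  qed
  obtain r0 p where "strict_mono r0" "p \<in> S" "weakly_converges_to (x \<circ> r0) p"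
    using subseq_cluster[of id] by (auto simp: strict_mono_def)
  have "weakly_converges_to x p"
  proof (rule weakly_converges_to_if_subseq_subseq)
    fix r :: "nat \<Rightarrow> nat"
    assume "strict_mono r"
    then obtain r' q where "strict_mono r'" "q \<in> S" "weakly_converges_to (x \<circ> r \<circ> r') q"
      using subseq_cluster by blast
    moreover from this(3) have "weakly_converges_to (x \<circ> (r \<circ> r')) q"
      by (simp add: o_assoc)
    moreover have "q = p"
      using weak_subseq_limits_eq_if_dist_convergent[OF dist_convergent dist_convergent
          strict_mono_o[OF \<open>strict_mono r\<close> \<open>strict_mono r'\<close>] _ \<open>strict_mono r0\<close>]
        calculation \<open>p \<in> S\<close> \<open>weakly_converges_to (x \<circ> r0) p\<close>
      by blast
    ultimately show "\<exists>r'. strict_mono r' \<and> weakly_converges_to (x \<circ> r \<circ> r') p"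
      by blast
  qed
  with \<open>p \<in> S\<close> show ?thesis
    by blast
qed

section \<open>Monotone sets and the Debrunner--Flor extension\<close>

definition monotonically_related :: "'a::real_inner \<times> 'a \<Rightarrow> 'a \<times> 'a \<Rightarrow> bool" where
  "monotonically_related g h \<longleftrightarrow> 0 \<le> inner (fst g - fst h) (snd g - snd h)"

definition monotone_set :: "('a::real_inner \<times> 'a) set \<Rightarrow> bool" where
  "monotone_set G \<longleftrightarrow> (\<forall>g\<in>G. \<forall>h\<in>G. monotonically_related g h)"

text \<open>\<open>extension_defect z g x \<le> 0\<close> says that \<open>(x, z - x)\<close> is monotonically related to \<open>g\<close>; as a
  function of \<open>x\<close> the defect is \<open>\<parallel>x - defect_centre z g\<parallel>\<^sup>2\<close> up to a constant.\<close>

definition extension_defect :: "'a::real_inner \<Rightarrow> 'a \<times> 'a \<Rightarrow> 'a \<Rightarrow> real" where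
  "extension_defect z g x = inner (x - fst g) (x + snd g - z)"

definition defect_centre :: "'a::real_vector \<Rightarrow> 'a \<times> 'a \<Rightarrow> 'a" where
  "defect_centre z g = (1/2) *\<^sub>R (z - snd g + fst g)"

lemma extension_defect_le_0_iff:
  "extension_defect z g x \<le> 0 \<longleftrightarrow> monotonically_related (x, z - x) g"
  unfolding extension_defect_def monotonically_related_def
  by (simp add: inner_simps algebra_simps)

lemma extension_defect_eq:
  "extension_defect z g x = norm (x - defect_centre z g)^2 - (norm (defect_centre z g)^2 - inner (fst g) (z - snd g))"
  unfolding extension_defect_def defect_centre_def
  by (simp add: power2_norm_eq_inner inner_simps inner_commute algebra_simps)

lemma extension_defect_shift:
  "extension_defect z g (x + t *\<^sub>R d)
    = extension_defect z g x + 2 * t * inner d (x - defect_centre z g) + t^2 * inner d d"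
  unfolding extension_defect_def defect_centre_def
  by (simp add: inner_simps algebra_simps inner_commute power2_eq_square)

lemma weighted_inner_covariance:
  fixes Y V :: "'i \<Rightarrow> 'a::real_inner"
  assumes "sum u I = 1"
  shows "(\<Sum>i\<in>I. \<Sum>j\<in>I. u i * u j * inner (Y i - Y j) (V i - V j))
    = 2 * ((\<Sum>i\<in>I. u i * inner (Y i) (V i)) - inner (\<Sum>i\<in>I. u i *\<^sub>R Y i) (\<Sum>i\<in>I. u i *\<^sub>R V i))"
proof -
  have "(\<Sum>i\<in>I. \<Sum>j\<in>I. u i * u j * inner (Y i - Y j) (V i - V j))
      = (\<Sum>i\<in>I. \<Sum>j\<in>I. u j * (u i * inner (Y i) (V i)) + u i * (u j * inner (Y j) (V j))
          - inner (u i *\<^sub>R Y i) (u j *\<^sub>R V j) - inner (u j *\<^sub>R Y j) (u i *\<^sub>R V i))"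
    by (intro sum.cong refl) (simp add: inner_simps algebra_simps)
  also have "\<dots> = 2 * ((\<Sum>i\<in>I. u i * inner (Y i) (V i)) - inner (\<Sum>i\<in>I. u i *\<^sub>R Y i) (\<Sum>i\<in>I. u i *\<^sub>R V i))"
    using assms
    by (simp add: sum.distrib sum_subtractf inner_sum_left inner_sum_right sum.swap[of _ I I]
        flip: sum_distrib_left sum_distrib_right)
  finally show ?thesis .
qed

lemma convex_combination_extension_defect_le:
  fixes g :: "'i \<Rightarrow> 'a::real_inner \<times> 'a"
  assumes "\<And>i. i \<in> I \<Longrightarrow> 0 \<le> u i" and "sum u I = 1"
    and mono: "\<And>i j. i \<in> I \<Longrightarrow> j \<in> I \<Longrightarrow> monotonically_related (g i) (g j)"
    and x0: "x0 = (\<Sum>i\<in>I. u i *\<^sub>R defect_centre z (g i))"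
  shows "(\<Sum>i\<in>I. u i * extension_defect z (g i) x0) \<le> 0"
proof -
  define yb where "yb = (\<Sum>i\<in>I. u i *\<^sub>R fst (g i))"
  define vb where "vb = (\<Sum>i\<in>I. u i *\<^sub>R snd (g i))"
  define T where "T = (\<Sum>i\<in>I. u i * inner (fst (g i)) (snd (g i)))"
  have "x0 = (\<Sum>i\<in>I. (1/2) *\<^sub>R (u i *\<^sub>R z - u i *\<^sub>R snd (g i) + u i *\<^sub>R fst (g i)))"
    unfolding x0 defect_centre_def by (intro sum.cong refl) (simp add: algebra_simps)
  also have "\<dots> = (1/2) *\<^sub>R (z - vb + yb)"
    using \<open>sum u I = 1\<close>
    by (simp add: sum.distrib sum_subtractf yb_def vb_def flip: scaleR_sum_right scaleR_sum_left)
  finally have "2 *\<^sub>R x0 = z - vb + yb"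
    by simp
  have "x0 + vb - z = (2 *\<^sub>R x0 - (z - vb + yb)) - (x0 - yb)"
    by (simp add: algebra_simps scaleR_2)
  then have x0_eq: "x0 + vb - z = - (x0 - yb)"
    using \<open>2 *\<^sub>R x0 = z - vb + yb\<close> by simp
  have "(\<Sum>i\<in>I. u i * extension_defect z (g i) x0)
      = (\<Sum>i\<in>I. u i * inner x0 (x0 - z) + inner x0 (u i *\<^sub>R snd (g i))
          - inner (u i *\<^sub>R fst (g i)) (x0 - z) - u i * inner (fst (g i)) (snd (g i)))"
    unfolding extension_defect_def by (intro sum.cong refl) (simp add: inner_simps algebra_simps)
  also have "\<dots> = sum u I * inner x0 (x0 - z) + inner x0 (\<Sum>i\<in>I. u i *\<^sub>R snd (g i))
      - inner (\<Sum>i\<in>I. u i *\<^sub>R fst (g i)) (x0 - z) - T"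
    by (simp add: sum.distrib sum_subtractf inner_sum_left inner_sum_right sum_distrib_right T_def)
  also have "\<dots> = inner (x0 - yb) (x0 + vb - z) - (T - inner yb vb)"
    using \<open>sum u I = 1\<close> unfolding yb_def[symmetric] vb_def[symmetric]
    by (simp add: inner_simps inner_commute algebra_simps)
  also have "\<dots> = - inner (x0 - yb) (x0 - yb) - (T - inner yb vb)"
    by (simp only: x0_eq inner_minus_right)
  also have "\<dots> \<le> 0"
  proof -
    have "0 \<le> (\<Sum>i\<in>I. \<Sum>j\<in>I. u i * u j * inner (fst (g i) - fst (g j)) (snd (g i) - snd (g j)))"
      using assms(1) mono by (intro sum_nonneg) (simp add: monotonically_related_def)
    then have "0 \<le> T - inner yb vb"
      unfolding weighted_inner_covariance[OF \<open>sum u I = 1\<close>] T_def yb_def vb_def by simp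
    moreover have "0 \<le> inner (x0 - yb) (x0 - yb)"
      by simp
    ultimately show ?thesis
      by linarith
  qed
  finally show ?thesis .
qed

lemma extension_defect_decreases_towards:
  assumes "inner (x - q) (defect_centre z g - q) \<le> 0" and "q \<noteq> x" and "0 < t" and "t < 1"
  shows "extension_defect z g (x + t *\<^sub>R (q - x)) < extension_defect z g x"
proof -
  define d where "d = q - x"
  define a where "a = inner (x - q) (defect_centre z g - q)"
  define dd where "dd = inner d d"
  have "dd > 0"
    using \<open>q \<noteq> x\<close> by (simp add: d_def dd_def)
  have eq: "inner d (x - defect_centre z g) = - dd + a"
    unfolding d_def dd_def a_def by (simp add: inner_simps algebra_simps inner_commute)
  have "2 * t * a \<le> 0"
    using assms(1,3) by (simp add: a_def mult_nonneg_nonpos)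
  then have "2 * t * inner d (x - defect_centre z g) \<le> - 2 * t * dd"
    unfolding eq by (simp add: algebra_simps)
  moreover have "t^2 * dd < 2 * t * dd"
    using \<open>dd > 0\<close> assms(3,4) by (simp add: power2_eq_square)
  ultimately show ?thesis
    unfolding d_def[symmetric] extension_defect_shift dd_def by linarith
qed

lemma continuous_on_Max_image:
  fixes f :: "'i \<Rightarrow> 'a::topological_space \<Rightarrow> real"
  assumes "finite I" and "I \<noteq> {}" and "\<And>i. i \<in> I \<Longrightarrow> continuous_on S (f i)"
  shows "continuous_on S (\<lambda>x. MAX i\<in>I. f i x)"
  using assms
proof (induction I rule: finite_ne_induct)
  case (singleton i)
  then show ?case
    by simp
next
  case (insert i I)
  then have "continuous_on S (\<lambda>x. max (f i x) (MAX i\<in>I. f i x))"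
    by (intro continuous_on_max) auto
  with insert show ?case
    by simp
qed

lemma convex_hull_finite_image_explicit:
  fixes f :: "'i \<Rightarrow> 'a::real_vector"
  assumes "finite I" and "x \<in> convex hull (f ` I)"
  shows "\<exists>u. (\<forall>i\<in>I. 0 \<le> u i) \<and> sum u I = 1 \<and> (\<Sum>i\<in>I. u i *\<^sub>R f i) = x"
proof -
  obtain w where w: "\<forall>p\<in>f ` I. 0 \<le> w p" "sum w (f ` I) = 1" "(\<Sum>p\<in>f ` I. w p *\<^sub>R p) = x"
    using assms convex_hull_finite[of "f ` I"] by auto
  \<comment> \<open>spread the weight of each point evenly over the indices mapping to it\<close>
  define u where "u i = w (f i) / card {j\<in>I. f j = f i}" for i
  have fibre_card: "card {j\<in>I. f j = p} > 0" if "p \<in> f ` I" for p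
    using assms(1) that by (auto simp: card_gt_0_iff)
  have fibre_u: "(\<Sum>i\<in>{j\<in>I. f j = p}. u i) = w p" if "p \<in> f ` I" for p
  proof -
    have "(\<Sum>i\<in>{j\<in>I. f j = p}. u i) = (\<Sum>i\<in>{j\<in>I. f j = p}. w p / card {j\<in>I. f j = p})"
      by (rule sum.cong) (auto simp: u_def)
    then show ?thesis
      using fibre_card[OF that] by simp
  qed
  have fibre_uf: "(\<Sum>i\<in>{j\<in>I. f j = p}. u i *\<^sub>R f i) = w p *\<^sub>R p" if "p \<in> f ` I" for p
  proof -
    have "(\<Sum>i\<in>{j\<in>I. f j = p}. u i *\<^sub>R f i) = (\<Sum>i\<in>{j\<in>I. f j = p}. u i) *\<^sub>R p"
      by (auto simp: scaleR_sum_left intro: sum.cong)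
    then show ?thesis
      using fibre_u[OF that] by simp
  qed
  have "sum u I = (\<Sum>p\<in>f ` I. \<Sum>i\<in>{j\<in>I. f j = p}. u i)"
    using assms(1) by (rule sum.image_gen)
  also have "\<dots> = sum w (f ` I)"
    using fibre_u by simp
  finally have "sum u I = 1"
    using w(2) by simp
  moreover have "(\<Sum>i\<in>I. u i *\<^sub>R f i) = (\<Sum>p\<in>f ` I. \<Sum>i\<in>{j\<in>I. f j = p}. u i *\<^sub>R f i)"
    using assms(1) by (rule sum.image_gen)
  then have "(\<Sum>i\<in>I. u i *\<^sub>R f i) = (\<Sum>p\<in>f ` I. w p *\<^sub>R p)"
    using fibre_uf by simp
  moreover have "\<forall>i\<in>I. 0 \<le> u i"
    using w(1) by (simp add: u_def)
  ultimately show ?thesis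
    using w(3) by auto
qed

lemma eventually_extension_defect_less:
  assumes "extension_defect z g x < \<mu>"
  shows "\<forall>\<^sub>F t in at_right 0. extension_defect z g (x + t *\<^sub>R d) < \<mu>"
proof -
  have "((\<lambda>t. extension_defect z g x + 2 * t * inner d (x - defect_centre z g) + t^2 * inner d d)
      \<longlongrightarrow> extension_defect z g x + 2 * 0 * inner d (x - defect_centre z g) + 0^2 * inner d d) (at_right 0)"
    by (intro tendsto_intros)
  then have "((\<lambda>t. extension_defect z g (x + t *\<^sub>R d)) \<longlongrightarrow> extension_defect z g x) (at_right 0)"
    unfolding extension_defect_shift by simp
  then show ?thesis
    using order_tendstoD(2) assms by blast
qed

lemma max_extension_defect_descent:
  fixes F :: "('a::real_inner \<times> 'a) set"
  assumes "finite F" and "F \<noteq> {}" and "q \<noteq> x0"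
    and obtuse: "\<And>g. g \<in> F \<Longrightarrow> extension_defect z g x0 = (MAX g\<in>F. extension_defect z g x0) \<Longrightarrow>
      inner (x0 - q) (defect_centre z g - q) \<le> 0"
  shows "\<exists>t. 0 < t \<and> t < 1 \<and>
    (MAX g\<in>F. extension_defect z g (x0 + t *\<^sub>R (q - x0))) < (MAX g\<in>F. extension_defect z g x0)"
proof -
  define \<mu> where "\<mu> = (MAX g\<in>F. extension_defect z g x0)"
  define Act where "Act = {g\<in>F. extension_defect z g x0 = \<mu>}"
  have "\<forall>\<^sub>F t in at_right 0. \<forall>g\<in>F - Act. extension_defect z g (x0 + t *\<^sub>R (q - x0)) < \<mu>"
  proof (rule eventually_ball_finite)
    show "finite (F - Act)"
      using assms(1) by simp
    have "extension_defect z g x0 < \<mu>" if "g \<in> F - Act" for g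
      using that Max_ge[OF finite_imageI[OF assms(1)], of "extension_defect z g x0" "\<lambda>g. extension_defect z g x0"]
      by (auto simp: Act_def \<mu>_def)
    then show "\<forall>g\<in>F - Act. \<forall>\<^sub>F t in at_right 0. extension_defect z g (x0 + t *\<^sub>R (q - x0)) < \<mu>"
      by (blast intro: eventually_extension_defect_less)
  qed
  moreover have "\<forall>\<^sub>F t in at_right (0::real). t \<in> {0<..<1}"
    by (rule eventually_at_right_real) simp
  ultimately have "\<forall>\<^sub>F t in at_right 0.
      (\<forall>g\<in>F - Act. extension_defect z g (x0 + t *\<^sub>R (q - x0)) < \<mu>) \<and> t \<in> {0<..<1}"
    by (rule eventually_conj)
  from eventually_happens[OF this] obtain t where t: "0 < t" "t < 1"
    and inactive: "\<forall>g\<in>F - Act. extension_defect z g (x0 + t *\<^sub>R (q - x0)) < \<mu>"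
    using trivial_limit_at_right_real by auto
  have "extension_defect z g (x0 + t *\<^sub>R (q - x0)) < \<mu>" if "g \<in> F" for g
  proof (cases "g \<in> Act")
    case True
    then show ?thesis
      using extension_defect_decreases_towards[OF obtuse \<open>q \<noteq> x0\<close> t] by (simp add: Act_def \<mu>_def)
  next
    case False
    then show ?thesis
      using inactive that by blast
  qed
  then have "(MAX g\<in>F. extension_defect z g (x0 + t *\<^sub>R (q - x0))) < \<mu>"
    using assms(1,2) by simp
  with t show ?thesis
    unfolding \<mu>_def by blast
qed

text \<open>At a minimiser of the largest defect over a convex set containing all centres, the centres of
  the maximal defects surround the minimiser: otherwise moving towards their hull lowers all of them.\<close>

lemma max_extension_defect_minimiser_in_active_hull:
  fixes F :: "('a::real_inner \<times> 'a) set"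
  assumes "finite F" and "F \<noteq> {}" and "convex K" and "x0 \<in> K" and "defect_centre z ` F \<subseteq> K"
    and min: "\<And>y. y \<in> K \<Longrightarrow> (MAX g\<in>F. extension_defect z g x0) \<le> (MAX g\<in>F. extension_defect z g y)"
  shows "x0 \<in> convex hull (defect_centre z ` {g\<in>F. extension_defect z g x0 = (MAX g\<in>F. extension_defect z g x0)})"
    (is "x0 \<in> ?C")
proof (rule ccontr)
  assume "x0 \<notin> ?C"
  obtain g where "g \<in> F" "extension_defect z g x0 = (MAX g\<in>F. extension_defect z g x0)"
    using Max_in[OF finite_imageI[OF assms(1)]] assms(2) by (metis (no_types, lifting) empty_is_image imageE)
  then have "defect_centre z g \<in> ?C"
    by (intro hull_inc imageI) simp
  then have "?C \<noteq> {}"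
    by blast
  moreover have "compact ?C"
    using assms(1) by (simp add: finite_imp_compact_convex_hull)
  moreover have "continuous_on ?C (\<lambda>w. norm (x0 - w))"
    by (intro continuous_intros)
  ultimately obtain q where "q \<in> ?C" and q_min: "\<forall>w\<in>?C. norm (x0 - q) \<le> norm (x0 - w)"
    using continuous_attains_inf by blast
  have "q \<noteq> x0"
    using \<open>q \<in> ?C\<close> \<open>x0 \<notin> ?C\<close> by auto
  moreover have "inner (x0 - q) (defect_centre z g - q) \<le> 0"
    if "g \<in> F" "extension_defect z g x0 = (MAX g\<in>F. extension_defect z g x0)" for g
    using nearest_point_inner_le[OF convex_convex_hull \<open>q \<in> ?C\<close> q_min] that by (simp add: hull_inc)
  ultimately obtain t where t: "0 < t" "t < 1"
    and "(MAX g\<in>F. extension_defect z g (x0 + t *\<^sub>R (q - x0))) < (MAX g\<in>F. extension_defect z g x0)"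
    using max_extension_defect_descent[OF assms(1,2)] by blast
  moreover have "x0 + t *\<^sub>R (q - x0) \<in> K"
  proof -
    have "?C \<subseteq> K"
      using assms(3,5) by (intro hull_minimal) auto
    then show ?thesis
      using convexD_alt[OF assms(3) assms(4), of q t] \<open>q \<in> ?C\<close> t by (auto simp: algebra_simps)
  qed
  ultimately show False
    using min[of "x0 + t *\<^sub>R (q - x0)"] by simp
qed

lemma equal_extension_defects_nonpos:
  fixes F :: "('a::real_inner \<times> 'a) set"
  assumes "finite F" and "monotone_set F"
    and "x0 \<in> convex hull (defect_centre z ` {g\<in>F. extension_defect z g x0 = \<mu>})"
  shows "\<mu> \<le> 0"
proof -
  define Act where "Act = {g\<in>F. extension_defect z g x0 = \<mu>}"
  have "finite Act"
    using \<open>finite F\<close> by (simp add: Act_def)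
  then obtain u where u: "\<forall>g\<in>Act. 0 \<le> u g" "sum u Act = 1"
    and x0: "(\<Sum>g\<in>Act. u g *\<^sub>R defect_centre z g) = x0"
    using convex_hull_finite_image_explicit assms(3) unfolding Act_def[symmetric] by metis
  have "monotonically_related g h" if "g \<in> Act" "h \<in> Act" for g h
    using assms(2) that by (simp add: monotone_set_def Act_def)
  then have "(\<Sum>g\<in>Act. u g * extension_defect z g x0) \<le> 0"
    using u by (intro convex_combination_extension_defect_le[OF _ _ _ x0[symmetric]]) auto
  moreover have "(\<Sum>g\<in>Act. u g * extension_defect z g x0) = (\<Sum>g\<in>Act. u g * \<mu>)"
    by (rule sum.cong) (auto simp: Act_def)
  moreover have "(\<Sum>g\<in>Act. u g * \<mu>) = \<mu>"
    using u(2) by (simp flip: sum_distrib_right)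
  ultimately show ?thesis
    by linarith
qed

lemma finite_monotone_set_extension:
  fixes F :: "('a::real_inner \<times> 'a) set"
  assumes "finite F" and "monotone_set F"
  shows "\<exists>x. \<forall>g\<in>F. monotonically_related (x, z - x) g"
proof (cases "F = {}")
  case True
  then show ?thesis
    by simp
next
  case False
  define \<Phi> where "\<Phi> x = (MAX g\<in>F. extension_defect z g x)" for x
  define K where "K = convex hull (defect_centre z ` F)"
  have "continuous_on K (extension_defect z g)" for g
    unfolding extension_defect_def by (intro continuous_intros)
  then have "continuous_on K \<Phi>"
    unfolding \<Phi>_def by (rule continuous_on_Max_image[OF \<open>finite F\<close> \<open>F \<noteq> {}\<close>])
  moreover have "compact K" "K \<noteq> {}"
    using \<open>finite F\<close> \<open>F \<noteq> {}\<close> by (simp_all add: K_def finite_imp_compact_convex_hull)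
  ultimately obtain x0 where "x0 \<in> K" and x0_min: "\<forall>y\<in>K. \<Phi> x0 \<le> \<Phi> y"
    using continuous_attains_inf[of K \<Phi>] by blast
  have "convex K" "defect_centre z ` F \<subseteq> K"
    unfolding K_def by (simp_all add: hull_subset)
  moreover have "\<And>y. y \<in> K \<Longrightarrow> \<Phi> x0 \<le> (MAX g\<in>F. extension_defect z g y)"
    using x0_min by (simp add: \<Phi>_def)
  ultimately have "x0 \<in> convex hull (defect_centre z ` {g\<in>F. extension_defect z g x0 = \<Phi> x0})"
    unfolding \<Phi>_def by (rule max_extension_defect_minimiser_in_active_hull[OF \<open>finite F\<close> \<open>F \<noteq> {}\<close> _ \<open>x0 \<in> K\<close>])
  then have "\<Phi> x0 \<le> 0"
    by (rule equal_extension_defects_nonpos[OF assms])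
  moreover have "extension_defect z g x0 \<le> \<Phi> x0" if "g \<in> F" for g
    unfolding \<Phi>_def using \<open>finite F\<close> that by (intro Max_ge) auto
  ultimately have "\<forall>g\<in>F. extension_defect z g x0 \<le> 0"
    by fastforce
  then have "\<forall>g\<in>F. monotonically_related (x0, z - x0) g"
    by (simp flip: extension_defect_le_0_iff)
  then show ?thesis
    by blast
qed

definition min_norm_point :: "'a::real_inner set \<Rightarrow> 'a" where
  "min_norm_point K = (SOME q. q \<in> K \<and> (\<forall>c\<in>K. norm q \<le> norm c))"

lemma min_norm_point:
  fixes K :: "'a::{real_inner,complete_space} set"
  assumes "closed K" and "convex K" and "K \<noteq> {}"
  shows "min_norm_point K \<in> K" and "\<And>c. c \<in> K \<Longrightarrow> norm (min_norm_point K) \<le> norm c"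
proof -
  have "\<exists>q. q \<in> K \<and> (\<forall>c\<in>K. norm q \<le> norm c)"
    using closed_convex_nearest_point_exists[OF assms, of 0] by auto
  then have "min_norm_point K \<in> K \<and> (\<forall>c\<in>K. norm (min_norm_point K) \<le> norm c)"
    unfolding min_norm_point_def by (rule someI_ex)
  then show "min_norm_point K \<in> K" "\<And>c. c \<in> K \<Longrightarrow> norm (min_norm_point K) \<le> norm c"
    by auto
qed

lemma min_norm_point_antimono:
  fixes K K' :: "'a::{real_inner,complete_space} set"
  assumes "closed K" and "convex K" and "closed K'" and "convex K'" and "K' \<noteq> {}" and "K' \<subseteq> K"
  shows "norm (min_norm_point K' - min_norm_point K)^2 \<le> norm (min_norm_point K')^2 - norm (min_norm_point K)^2"
proof -
  have "K \<noteq> {}"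
    using assms(5,6) by blast
  then show ?thesis
    using min_norm_point_dist_le[OF \<open>convex K\<close> min_norm_point(1)[OF assms(1,2)]]
      min_norm_point(2)[OF assms(1,2)] min_norm_point(1)[OF assms(3-5)] assms(6)
    by blast
qed

lemma SUP_approximated_by_decreasing_chain:
  fixes m :: "'b set \<Rightarrow> real"
  assumes "\<S> \<noteq> {}" and "bdd_above (m ` \<S>)" and inter: "\<And>S T. S \<in> \<S> \<Longrightarrow> T \<in> \<S> \<Longrightarrow> S \<inter> T \<in> \<S>"
    and anti: "\<And>S T. S \<in> \<S> \<Longrightarrow> T \<in> \<S> \<Longrightarrow> T \<subseteq> S \<Longrightarrow> m S \<le> m T"
  shows "\<exists>C. \<forall>n. C n \<in> \<S> \<and> C (Suc n) \<subseteq> C n \<and> (SUP S\<in>\<S>. m S) - inverse (real (Suc n)) < m (C n)"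
proof -
  have "\<exists>S\<in>\<S>. (SUP S\<in>\<S>. m S) - inverse (real (Suc n)) < m S" for n
  proof -
    have "(SUP S\<in>\<S>. m S) - inverse (real (Suc n)) < (SUP S\<in>\<S>. m S)"
      by simp
    then show ?thesis
      using less_cSUP_iff[OF assms(1,2)] by blast
  qed
  then obtain T where T: "\<And>n. T n \<in> \<S>" "\<And>n. (SUP S\<in>\<S>. m S) - inverse (real (Suc n)) < m (T n)"
    by metis
  define C where "C = rec_nat (T 0) (\<lambda>n S. S \<inter> T (Suc n))"
  have C: "C 0 = T 0" "C (Suc n) = C n \<inter> T (Suc n)" for n
    by (simp_all add: C_def)
  have CT: "C n \<in> \<S> \<and> C n \<subseteq> T n" for n
    by (induction n) (use T(1) inter in \<open>auto simp: C\<close>)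
  have "(SUP S\<in>\<S>. m S) - inverse (real (Suc n)) < m (C n)" for n
    using T(2)[of n] anti[OF T(1)[of n] conjunct1[OF CT[of n]] conjunct2[OF CT[of n]]] by linarith
  moreover have "C (Suc n) \<subseteq> C n" for n
    by (auto simp: C)
  ultimately show ?thesis
    using CT by blast
qed

text \<open>The limit of the minimal-norm points along a chain on which their norms approach the supremum.\<close>

lemma min_norm_points_limit_in_directed_family:
  fixes \<S> :: "'a::{real_inner,complete_space} set set"
  assumes closed_convex: "\<And>S. S \<in> \<S> \<Longrightarrow> closed S \<and> convex S \<and> S \<noteq> {}"
    and "\<S> \<noteq> {}" and inter: "\<And>S T. S \<in> \<S> \<Longrightarrow> T \<in> \<S> \<Longrightarrow> S \<inter> T \<in> \<S>"
    and bounded: "\<And>S. S \<in> \<S> \<Longrightarrow> norm (min_norm_point S) \<le> R"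
  shows "\<exists>p. \<forall>S\<in>\<S>. p \<in> S"
proof -
  define m where "m S = norm (min_norm_point S)^2" for S :: "'a set"
  have step: "norm (min_norm_point T - min_norm_point S)^2 \<le> m T - m S"
    if "S \<in> \<S>" "T \<in> \<S>" "T \<subseteq> S" for S T
    unfolding m_def using that closed_convex by (intro min_norm_point_antimono) auto
  have anti: "m S \<le> m T" if "S \<in> \<S>" "T \<in> \<S>" "T \<subseteq> S" for S T
    using step[OF that] zero_le_power2[of "norm (min_norm_point T - min_norm_point S)"] by linarith
  have "bdd_above (m ` \<S>)"
    using bounded by (intro bdd_aboveI[of _ "R^2"]) (auto simp: m_def power_mono)
  then obtain C where C: "\<And>n. C n \<in> \<S>" "\<And>n. C (Suc n) \<subseteq> C n"
    and C_sup: "\<And>n. (SUP S\<in>\<S>. m S) - inverse (real (Suc n)) < m (C n)"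
    using SUP_approximated_by_decreasing_chain[OF \<open>\<S> \<noteq> {}\<close> \<open>bdd_above (m ` \<S>)\<close> inter anti] by blast
  have close: "norm (min_norm_point T - min_norm_point (C n))^2 < inverse (real (Suc n))"
    if "T \<in> \<S>" "T \<subseteq> C n" for T n
    using step[OF C(1) that] C_sup[of n] cSUP_upper[OF that(1) \<open>bdd_above (m ` \<S>)\<close>] by linarith
  define xs where "xs n = min_norm_point (C n)" for n
  have "Cauchy xs"
  proof (rule Cauchy_if_norm_diff_sq_le[of 1])
    fix n k :: nat
    assume "n \<le> k"
    then have "C k \<subseteq> C n"
      by (rule lift_Suc_antimono_le[of C, OF C(2)])
    then have "norm (xs k - xs n)^2 < inverse (real (Suc n))"
      using close[OF C(1)] by (simp add: xs_def)
    then show "norm (xs n - xs k)^2 \<le> 1 * inverse (real (Suc n))"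
      by (simp add: norm_minus_commute)
  qed simp
  then obtain p where p: "xs \<longlonglongrightarrow> p"
    using Cauchy_convergent_iff convergent_def by blast
  have "p \<in> S" if "S \<in> \<S>" for S
  proof -
    define ys where "ys n = min_norm_point (S \<inter> C n)" for n
    have "ys n \<in> S" for n
      using min_norm_point(1) closed_convex[OF inter[OF that C(1)]] by (auto simp: ys_def)
    have "norm (ys n - xs n)^2 < inverse (real (Suc n))" for n
      using close[OF inter[OF that C(1)]] by (simp add: ys_def xs_def)
    then have "(\<lambda>n. norm (ys n - xs n)^2) \<longlonglongrightarrow> 0"
      by (intro Lim_null_comparison[OF always_eventually LIMSEQ_inverse_real_of_nat]) (simp add: less_imp_le)
    then have "(\<lambda>n. sqrt (norm (ys n - xs n)^2)) \<longlonglongrightarrow> sqrt 0"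
      by (rule tendsto_real_sqrt)
    then have "(\<lambda>n. ys n - xs n) \<longlonglongrightarrow> 0"
      by (simp add: tendsto_norm_zero_iff)
    then have "(\<lambda>n. xs n + (ys n - xs n)) \<longlonglongrightarrow> p + 0"
      using p by (rule tendsto_add[rotated])
    then show "p \<in> S"
      using closed_convex[OF that] \<open>\<And>n. ys n \<in> S\<close> closed_sequentially[of S ys p] by simp
  qed
  then show ?thesis
    by blast
qed

lemma closed_convex_Inter_nonempty:
  fixes \<K> :: "'a::{real_inner,complete_space} set set"
  assumes closed_convex: "\<And>K. K \<in> \<K> \<Longrightarrow> closed K \<and> convex K"
    and "K0 \<in> \<K>" and "bounded K0"
    and fip: "\<And>\<F>. finite \<F> \<Longrightarrow> \<F> \<subseteq> \<K> \<Longrightarrow> \<Inter>\<F> \<noteq> {}"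
  shows "\<Inter>\<K> \<noteq> {}"
proof -
  define \<S> where "\<S> = {\<Inter>\<F> | \<F>. finite \<F> \<and> \<F> \<subseteq> \<K> \<and> K0 \<in> \<F>}"
  obtain R where R: "\<forall>x\<in>K0. norm x \<le> R"
    using \<open>bounded K0\<close> bounded_iff by blast
  have \<S>: "closed S \<and> convex S \<and> S \<noteq> {} \<and> S \<subseteq> K0" if S: "S \<in> \<S>" for S
  proof -
    obtain \<F> where "S = \<Inter>\<F>" "finite \<F>" "\<F> \<subseteq> \<K>" "K0 \<in> \<F>"
      using S unfolding \<S>_def by blast
    moreover have "closed (\<Inter>\<F>)"
      using \<open>\<F> \<subseteq> \<K>\<close> closed_convex by (intro closed_Inter) blast
    moreover have "convex (\<Inter>\<F>)"
      using \<open>\<F> \<subseteq> \<K>\<close> closed_convex by (intro convex_Inter) blast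
    moreover have "\<Inter>\<F> \<noteq> {}"
      using fip[OF \<open>finite \<F>\<close> \<open>\<F> \<subseteq> \<K>\<close>] .
    moreover have "\<Inter>\<F> \<subseteq> K0"
      using \<open>K0 \<in> \<F>\<close> by (rule Inter_lower)
    ultimately show ?thesis
      by simp
  qed
  have "\<exists>p. \<forall>S\<in>\<S>. p \<in> S"
  proof (rule min_norm_points_limit_in_directed_family)
    show "closed S \<and> convex S \<and> S \<noteq> {}" if "S \<in> \<S>" for S
      using \<S>[OF that] by blast
    have "\<Inter>{K0} \<in> \<S>"
      unfolding \<S>_def using \<open>K0 \<in> \<K>\<close> by (intro CollectI exI[of _ "{K0}"]) auto
    then show "\<S> \<noteq> {}"
      by blast
    show "S \<inter> T \<in> \<S>" if ST: "S \<in> \<S>" "T \<in> \<S>" for S T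
    proof -
      obtain \<F> \<F>' where "S = \<Inter>\<F>" "T = \<Inter>\<F>'" "finite \<F>" "\<F> \<subseteq> \<K>" "K0 \<in> \<F>" "finite \<F>'" "\<F>' \<subseteq> \<K>"
        using ST unfolding \<S>_def by blast
      then show ?thesis
        unfolding \<S>_def by (intro CollectI exI[of _ "\<F> \<union> \<F>'"]) auto
    qed
    show "norm (min_norm_point S) \<le> R" if "S \<in> \<S>" for S
    proof -
      have "min_norm_point S \<in> S"
        using \<S>[OF that] by (intro min_norm_point(1)) auto
      then show ?thesis
        using \<S>[OF that] R by blast
    qed
  qed
  then obtain p where p: "\<forall>S\<in>\<S>. p \<in> S"
    by blast
  have "p \<in> K" if "K \<in> \<K>" for K
  proof -
    have "\<Inter>{K, K0} \<in> \<S>"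
      unfolding \<S>_def using that \<open>K0 \<in> \<K>\<close> by (intro CollectI exI[of _ "{K, K0}"]) auto
    then have "p \<in> \<Inter>{K, K0}"
      by (rule bspec[OF p])
    then show ?thesis
      by simp
  qed
  then show ?thesis
    by blast
qed

lemma norm_sq_sublevel_eq:
  fixes c :: "'a::real_normed_vector"
  shows "{x. norm (x - c)^2 \<le> \<rho>} = (if \<rho> < 0 then {} else cball c (sqrt \<rho>))"
proof (cases "\<rho> < 0")
  case True
  then have "\<not> norm (x - c)^2 \<le> \<rho>" for x
    using zero_le_power2[of "norm (x - c)"] by linarith
  with True show ?thesis
    by simp
next
  case False
  have "norm (x - c)^2 \<le> \<rho> \<longleftrightarrow> dist c x \<le> sqrt \<rho>" for x
    by (metis abs_norm_cancel dist_norm norm_minus_commute real_sqrt_abs real_sqrt_le_iff)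
  with False show ?thesis
    by (simp add: cball_def)
qed

lemma monotone_set_extension:
  fixes G :: "('a::{real_inner,complete_space} \<times> 'a) set"
  assumes "monotone_set G"
  shows "\<exists>x. \<forall>g\<in>G. monotonically_related (x, z - x) g"
proof (cases "G = {}")
  case True
  then show ?thesis
    by simp
next
  case False
  then obtain g0 where "g0 \<in> G"
    by blast
  define S where "S g = {x. monotonically_related (x, z - x) g}" for g
  have S_eq: "S g = (let \<rho> = norm (defect_centre z g)^2 - inner (fst g) (z - snd g)
      in if \<rho> < 0 then {} else cball (defect_centre z g) (sqrt \<rho>))" for g
    unfolding S_def Let_def norm_sq_sublevel_eq[symmetric]
    by (simp flip: extension_defect_le_0_iff add: extension_defect_eq)
  have "\<Inter>(S ` G) \<noteq> {}"
  proof (rule closed_convex_Inter_nonempty)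
    show "closed K \<and> convex K" if "K \<in> S ` G" for K
      using that by (auto simp: S_eq Let_def)
    show "S g0 \<in> S ` G" "bounded (S g0)"
      using \<open>g0 \<in> G\<close> by (simp_all add: S_eq Let_def)
    show "\<Inter>\<F> \<noteq> {}" if "finite \<F>" and "\<F> \<subseteq> S ` G" for \<F>
    proof -
      obtain F where "F \<subseteq> G" "finite F" "\<F> = S ` F"
        using finite_subset_image[OF \<open>finite \<F>\<close> \<open>\<F> \<subseteq> S ` G\<close>] by blast
      moreover have "monotone_set F"
        using assms \<open>F \<subseteq> G\<close> by (auto simp: monotone_set_def)
      ultimately obtain x where "\<forall>g\<in>F. monotonically_related (x, z - x) g"
        using finite_monotone_set_extension by blast
      then have "x \<in> \<Inter>\<F>"
        by (simp add: S_def \<open>\<F> = S ` F\<close>)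
      then show ?thesis
        by blast
    qed
  qed
  then obtain x where "x \<in> \<Inter>(S ` G)"
    by blast
  then have "\<forall>g\<in>G. monotonically_related (x, z - x) g"
    by (simp add: S_def)
  then show ?thesis
    by blast
qed

section \<open>Resolvents of maximally monotone operators\<close>

lemma maximally_monotone_imp_monotone_op:
  "maximally_monotone A \<Longrightarrow> monotone_op A"
  by (simp add: maximally_monotone_def)

lemma maximally_monotone_memI:
  assumes "maximally_monotone A" and related: "\<And>y b. b \<in> A y \<Longrightarrow> 0 \<le> inner (p - y) (a - b)"
  shows "a \<in> A p"
proof -
  define A' where "A' x = (if x = p then insert a (A x) else A x)" for x
  have "monotone_op A'"
    unfolding monotone_op_def
  proof (intro allI impI)
    fix x y u v
    assume "u \<in> A' x" "v \<in> A' y"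
    then consider "u \<in> A x" "v \<in> A y" | "x = p" "u = a" "v \<in> A y" | "u \<in> A x" "y = p" "v = a"
      | "x = p" "u = a" "y = p" "v = a"
      by (auto simp: A'_def split: if_splits)
    then show "0 \<le> inner (x - y) (u - v)"
    proof cases
      case 1
      then show ?thesis
        using maximally_monotone_imp_monotone_op[OF assms(1)] by (simp add: monotone_op_def)
    next
      case 2
      then show ?thesis
        using related by simp
    next
      case 3
      then show ?thesis
        using related[of u x] by (simp add: inner_diff_left inner_diff_right)
    next
      case 4
      then show ?thesis
        by simp
    qed
  qed
  moreover have "\<forall>x. A x \<subseteq> A' x"
    by (simp add: A'_def subset_insertI)
  ultimately have "A' = A"
    using assms(1) by (simp add: maximally_monotone_def)
  then show ?thesis
    by (metis A'_def insertI1)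
qed

lemma maximally_monotone_resolvent_exists:
  fixes A :: "'a::{real_inner,complete_space} \<Rightarrow> 'a set"
  assumes "maximally_monotone A" and "lam > 0"
  shows "\<exists>x. (1/lam) *\<^sub>R (z - x) \<in> A x"
proof -
  define G where "G = {(y, lam *\<^sub>R b) | y b. b \<in> A y}"
  have "monotone_set G"
    using maximally_monotone_imp_monotone_op[OF assms(1)] \<open>lam > 0\<close>
    by (auto simp: monotone_set_def monotonically_related_def G_def monotone_op_def
        simp flip: scaleR_diff_right)
  then obtain p where p: "\<forall>g\<in>G. monotonically_related (p, z - p) g"
    using monotone_set_extension by blast
  have "0 \<le> inner (p - y) ((1/lam) *\<^sub>R (z - p) - b)" if "b \<in> A y" for y b
  proof -
    have "0 \<le> inner (p - y) (z - p - lam *\<^sub>R b)"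
      using p that by (force simp: G_def monotonically_related_def)
    moreover have "(1/lam) *\<^sub>R (z - p) - b = (1/lam) *\<^sub>R (z - p - lam *\<^sub>R b)"
      using \<open>lam > 0\<close> by (simp add: algebra_simps)
    ultimately show ?thesis
      using \<open>lam > 0\<close> by simp
  qed
  then show ?thesis
    using maximally_monotone_memI[OF assms(1)] by blast
qed

lemma resolvent_inclusion:
  fixes A :: "'a::{real_inner,complete_space} \<Rightarrow> 'a set"
  assumes "maximally_monotone A" and "lam > 0"
  shows "(1/lam) *\<^sub>R (z - resolvent lam A z) \<in> A (resolvent lam A z)"
proof -
  have char: "z \<in> (\<lambda>u. x + lam *\<^sub>R u) ` A x \<longleftrightarrow> (1/lam) *\<^sub>R (z - x) \<in> A x" for x
  proof
    assume "z \<in> (\<lambda>u. x + lam *\<^sub>R u) ` A x"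
    then show "(1/lam) *\<^sub>R (z - x) \<in> A x"
      using \<open>lam > 0\<close> by auto
  next
    assume "(1/lam) *\<^sub>R (z - x) \<in> A x"
    moreover have "z = x + lam *\<^sub>R ((1/lam) *\<^sub>R (z - x))"
      using \<open>lam > 0\<close> by simp
    ultimately show "z \<in> (\<lambda>u. x + lam *\<^sub>R u) ` A x"
      by blast
  qed
  obtain x where x: "(1/lam) *\<^sub>R (z - x) \<in> A x"
    using maximally_monotone_resolvent_exists[OF assms] by blast
  have "x' = x" if "(1/lam) *\<^sub>R (z - x') \<in> A x'" for x'
  proof -
    have "0 \<le> inner (x' - x) ((1/lam) *\<^sub>R (z - x') - (1/lam) *\<^sub>R (z - x))"
      using maximally_monotone_imp_monotone_op[OF assms(1)] that x by (simp add: monotone_op_def)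
    also have "\<dots> = - (1/lam) * inner (x' - x) (x' - x)"
    proof -
      have "(1/lam) *\<^sub>R (z - x') - (1/lam) *\<^sub>R (z - x) = (- (1/lam)) *\<^sub>R (x' - x)"
        by (simp add: algebra_simps)
      then show ?thesis
        by (simp only: inner_scaleR_right)
    qed
    finally have "inner (x' - x) (x' - x) \<le> 0"
      using \<open>lam > 0\<close> by (simp add: divide_le_0_iff)
    then show ?thesis
      by (metis inner_gt_zero_iff not_le right_minus_eq)
  qed
  with x have "\<exists>!x. z \<in> (\<lambda>u. x + lam *\<^sub>R u) ` A x"
    unfolding char by blast
  then have "z \<in> (\<lambda>u. resolvent lam A z + lam *\<^sub>R u) ` A (resolvent lam A z)"
    unfolding resolvent_def by (rule theI')
  then show ?thesis
    unfolding char .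
qed

lemma resolvent_nonexpansive:
  fixes A :: "'a::{real_inner,complete_space} \<Rightarrow> 'a set"
  assumes "maximally_monotone A" and "lam > 0"
  shows "norm (resolvent lam A z1 - resolvent lam A z2) \<le> norm (z1 - z2)"
proof -
  define r1 where "r1 = resolvent lam A z1"
  define r2 where "r2 = resolvent lam A z2"
  have "0 \<le> inner (r1 - r2) ((1/lam) *\<^sub>R (z1 - r1) - (1/lam) *\<^sub>R (z2 - r2))"
    using maximally_monotone_imp_monotone_op[OF assms(1)] resolvent_inclusion[OF assms]
    unfolding monotone_op_def r1_def r2_def by blast
  also have "\<dots> = (1/lam) * (inner (r1 - r2) (z1 - z2) - inner (r1 - r2) (r1 - r2))"
  proof -
    have "(1/lam) *\<^sub>R (z1 - r1) - (1/lam) *\<^sub>R (z2 - r2) = (1/lam) *\<^sub>R ((z1 - z2) - (r1 - r2))"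
      by (simp add: algebra_simps)
    then show ?thesis
      by (simp only: inner_scaleR_right inner_diff_right)
  qed
  finally have "inner (r1 - r2) (r1 - r2) \<le> inner (r1 - r2) (z1 - z2)"
    using \<open>lam > 0\<close> by (simp add: zero_le_divide_iff)
  also have "\<dots> \<le> norm (r1 - r2) * norm (z1 - z2)"
    by (rule norm_cauchy_schwarz)
  finally have "norm (r1 - r2) * norm (r1 - r2) \<le> norm (r1 - r2) * norm (z1 - z2)"
    by (simp add: power2_norm_eq_inner[symmetric] power2_eq_square)
  then show ?thesis
    unfolding r1_def[symmetric] r2_def[symmetric]
    by (cases "r1 = r2") (auto simp: mult_le_cancel_left)
qed

text \<open>The candidate point is the fixed point of the contraction \<open>x \<mapsto> J\<^sub>\<lambda>\<^sub>A (p - \<lambda> B x)\<close> with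
  \<open>\<lambda> = 1/(2L)\<close>; the hypothesis then forces it to be \<open>p\<close>.\<close>

lemma mem_zeros_sum_by_maximality:
  fixes A :: "'a::{real_inner,complete_space} \<Rightarrow> 'a set"
  assumes "maximally_monotone A" and "L-lipschitz_on UNIV B" and "L > 0"
    and related: "\<And>u a. a \<in> A u \<Longrightarrow> 0 \<le> inner (u - p) (a + B u)"
  shows "p \<in> zeros_sum A B"
proof -
  define lam where "lam = 1 / (2 * L)"
  have "lam > 0"
    using \<open>L > 0\<close> by (simp add: lam_def)
  define T where "T x = resolvent lam A (p - lam *\<^sub>R B x)" for x
  have "dist (T x) (T y) \<le> (1/2) * dist x y" for x y
  proof -
    have "dist (T x) (T y) \<le> norm ((p - lam *\<^sub>R B x) - (p - lam *\<^sub>R B y))"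
      unfolding T_def dist_norm by (rule resolvent_nonexpansive[OF assms(1) \<open>lam > 0\<close>])
    also have "\<dots> = lam * dist (B x) (B y)"
      using \<open>lam > 0\<close> by (simp add: dist_norm norm_minus_commute flip: scaleR_diff_right)
    also have "\<dots> \<le> lam * (L * dist x y)"
      using assms(2) \<open>lam > 0\<close> by (simp add: lipschitz_on_def)
    also have "\<dots> = (1/2) * dist x y"
      using \<open>L > 0\<close> by (simp add: lam_def)
    finally show ?thesis .
  qed
  then obtain x where "T x = x"
    using banach_fix_type[of "1/2" T] by auto
  define a where "a = (1/lam) *\<^sub>R ((p - lam *\<^sub>R B x) - x)"
  have "a \<in> A x"
    using resolvent_inclusion[OF assms(1) \<open>lam > 0\<close>, of "p - lam *\<^sub>R B x"] \<open>T x = x\<close>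
    by (simp add: T_def a_def)
  have "a + B x = (1/lam) *\<^sub>R (p - x)"
    using \<open>lam > 0\<close> by (simp add: a_def algebra_simps)
  have "0 \<le> inner (x - p) (a + B x)"
    using related[OF \<open>a \<in> A x\<close>] .
  also have "\<dots> = - (1/lam) * inner (x - p) (x - p)"
    unfolding \<open>a + B x = (1/lam) *\<^sub>R (p - x)\<close> by (simp add: inner_diff_right inner_commute algebra_simps)
  finally have "inner (x - p) (x - p) \<le> 0"
    using \<open>lam > 0\<close> by (simp add: divide_le_0_iff)
  then have "x = p"
    by (metis inner_gt_zero_iff not_le right_minus_eq)
  with \<open>a \<in> A x\<close> \<open>a + B x = (1/lam) *\<^sub>R (p - x)\<close> show ?thesis
    by (auto simp: zeros_sum_def)
qed

lemma zeros_sum_weak_strong_closed: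
  fixes A :: "'a::{real_inner,complete_space} \<Rightarrow> 'a set"
  assumes "maximally_monotone A" and "monotone_single B" and "L-lipschitz_on UNIV B" and "L > 0"
    and graph: "\<And>j. w j - B (c j) \<in> A (c j)"
    and "bounded (range c)" and "weakly_converges_to c q" and "w \<longlonglongrightarrow> 0"
  shows "q \<in> zeros_sum A B"
proof (rule mem_zeros_sum_by_maximality[OF assms(1,3,4)])
  fix u a
  assume "a \<in> A u"
  obtain R where R: "\<And>j. norm (c j) \<le> R"
    using \<open>bounded (range c)\<close> by (auto simp: bounded_iff)
  have below: "inner (u - c j) (w j) \<le> inner (u - c j) (a + B u)" for j
  proof -
    have "0 \<le> inner (u - c j) (a - (w j - B (c j)))"
      using maximally_monotone_imp_monotone_op[OF assms(1)] \<open>a \<in> A u\<close> graph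
      by (simp add: monotone_op_def)
    moreover have "0 \<le> inner (u - c j) (B u - B (c j))"
      using \<open>monotone_single B\<close> by (simp add: monotone_single_def)
    ultimately show ?thesis
      by (simp add: inner_diff_right inner_add_right)
  qed
  have "(\<lambda>j. inner (u - c j) (w j)) \<longlonglongrightarrow> 0"
  proof (rule Lim_null_comparison)
    show "\<forall>\<^sub>F j in sequentially. norm (inner (u - c j) (w j)) \<le> (norm u + R) * norm (w j)"
    proof (intro always_eventually allI)
      fix j
      have "norm (u - c j) \<le> norm u + R"
        using norm_triangle_ineq4[of u "c j"] R[of j] by linarith
      then show "norm (inner (u - c j) (w j)) \<le> (norm u + R) * norm (w j)"
        using Cauchy_Schwarz_ineq2[of "u - c j" "w j"] by (simp add: mult_right_mono order_trans)
    qed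
    show "(\<lambda>j. (norm u + R) * norm (w j)) \<longlonglongrightarrow> 0"
      using tendsto_mult_right_zero[OF tendsto_norm_zero[OF \<open>w \<longlonglongrightarrow> 0\<close>]] by simp
  qed
  moreover have "(\<lambda>j. inner (u - c j) (a + B u)) \<longlonglongrightarrow> inner (u - q) (a + B u)"
  proof -
    have "(\<lambda>j. inner (c j) (a + B u)) \<longlonglongrightarrow> inner q (a + B u)"
      using \<open>weakly_converges_to c q\<close> by (simp add: weakly_converges_to_def)
    then show ?thesis
      unfolding inner_diff_left by (rule tendsto_diff[OF tendsto_const])
  qed
  ultimately show "0 \<le> inner (u - q) (a + B u)"
    using below by (intro LIMSEQ_le[of "\<lambda>j. inner (u - c j) (w j)" 0]) auto
qed

section \<open>The forward-reflected-backward step\<close>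

lemma lipschitz_inner_le:
  fixes B :: "'a::real_inner \<Rightarrow> 'a"
  assumes "L-lipschitz_on UNIV B"
  shows "2 * \<bar>inner u (B b - B a)\<bar> \<le> L * (norm u^2 + norm (b - a)^2)"
proof -
  have "L \<ge> 0"
    using assms lipschitz_on_nonneg by blast
  have "\<bar>inner u (B b - B a)\<bar> \<le> norm u * norm (B b - B a)"
    by (rule Cauchy_Schwarz_ineq2)
  also have "\<dots> \<le> norm u * (L * norm (b - a))"
    using assms by (intro mult_left_mono) (auto simp: lipschitz_on_def dist_norm)
  finally have "2 * \<bar>inner u (B b - B a)\<bar> \<le> L * (2 * (norm u * norm (b - a)))"
    by (simp add: algebra_simps)
  also have "\<dots> \<le> L * (norm u^2 + norm (b - a)^2)"
    using \<open>L \<ge> 0\<close> sum_squares_bound[of "norm u" "norm (b - a)"] by (intro mult_left_mono) auto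
  finally show ?thesis .
qed

text \<open>The Lyapunov function at consecutive iterates \<open>a\<close>, \<open>b\<close>, where \<open>l\<close> is the step size of the update
  that produced \<open>b\<close>.\<close>

definition frb_energy :: "('a::real_inner \<Rightarrow> 'a) \<Rightarrow> real \<Rightarrow> 'a \<Rightarrow> real \<Rightarrow> 'a \<Rightarrow> 'a \<Rightarrow> real" where
  "frb_energy B L s l a b = norm (b - s)^2 - 2 * l * inner (b - s) (B b - B a) + l * L * norm (b - a)^2"

lemma frb_energy_lower_bound:
  assumes "L-lipschitz_on UNIV B" and "0 \<le> l" and "l * L \<le> 1/2"
  shows "norm (b - s)^2 / 2 \<le> frb_energy B L s l a b"
proof -
  have "l * (2 * \<bar>inner (b - s) (B b - B a)\<bar>) \<le> l * (L * (norm (b - s)^2 + norm (b - a)^2))"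
    using lipschitz_inner_le[OF assms(1)] \<open>0 \<le> l\<close> by (rule mult_left_mono)
  moreover have "2 * l * inner (b - s) (B b - B a) \<le> l * (2 * \<bar>inner (b - s) (B b - B a)\<bar>)"
    using \<open>0 \<le> l\<close> by (simp add: mult_left_mono)
  moreover have "(l * L) * norm (b - s)^2 \<le> (1/2) * norm (b - s)^2"
    using \<open>l * L \<le> 1/2\<close> by (rule mult_right_mono) simp
  ultimately show ?thesis
    unfolding frb_energy_def by (simp add: algebra_simps)
qed

lemma frb_energy_dist_sq_diff:
  assumes "L-lipschitz_on UNIV B" and "0 \<le> l" and "l * L \<le> 1/2"
  shows "\<bar>frb_energy B L s l a b - norm (b - s)^2\<bar> \<le> norm (b - s) * norm (b - a) + norm (b - a)^2"
proof -
  have "L \<ge> 0"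
    using assms(1) lipschitz_on_nonneg by blast
  define I where "I = inner (b - s) (B b - B a)"
  have "\<bar>I\<bar> \<le> norm (b - s) * norm (B b - B a)"
    unfolding I_def by (rule Cauchy_Schwarz_ineq2)
  also have "\<dots> \<le> norm (b - s) * (L * norm (b - a))"
    using assms(1) by (intro mult_left_mono) (auto simp: lipschitz_on_def dist_norm)
  finally have "2 * l * \<bar>I\<bar> \<le> 2 * l * (norm (b - s) * (L * norm (b - a)))"
    using \<open>0 \<le> l\<close> by (intro mult_left_mono) auto
  also have "\<dots> = 2 * (l * L) * (norm (b - s) * norm (b - a))"
    by (simp add: ac_simps)
  also have "\<dots> \<le> 1 * (norm (b - s) * norm (b - a))"
    using \<open>l * L \<le> 1/2\<close> by (intro mult_right_mono) auto
  finally have "\<bar>2 * l * I\<bar> \<le> norm (b - s) * norm (b - a)"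
    using \<open>0 \<le> l\<close> by (simp add: abs_mult)
  moreover have "0 \<le> l * L * norm (b - a)^2"
    using \<open>0 \<le> l\<close> \<open>L \<ge> 0\<close> by simp
  moreover have "l * L * norm (b - a)^2 \<le> 1 * norm (b - a)^2"
    using \<open>l * L \<le> 1/2\<close> by (intro mult_right_mono) auto
  ultimately show ?thesis
    unfolding frb_energy_def I_def[symmetric] by linarith
qed

lemma frb_energy_decrease:
  fixes A :: "'a::{real_inner,complete_space} \<Rightarrow> 'a set"
  assumes "maximally_monotone A" and "monotone_single B" and Blip: "L-lipschitz_on UNIV B"
    and "s \<in> zeros_sum A B"
    and "0 \<le> l0" and "0 < l1" and "l0 * L \<le> (1 - 2 * \<epsilon>) / 2" and "l1 * L \<le> (1 - 2 * \<epsilon>) / 2"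
    and c: "c = resolvent l1 A (b - l1 *\<^sub>R B b - l0 *\<^sub>R (B b - B a))"
  shows "frb_energy B L s l1 b c + 2 * \<epsilon> * norm (c - b)^2 \<le> frb_energy B L s l0 a b"
proof -
  define zz where "zz = b - l1 *\<^sub>R B b - l0 *\<^sub>R (B b - B a)"
  obtain as where "as \<in> A s" "as + B s = 0"
    using \<open>s \<in> zeros_sum A B\<close> by (auto simp: zeros_sum_def)
  moreover have "as = - B s"
    using \<open>as + B s = 0\<close> by (simp add: eq_neg_iff_add_eq_0)
  ultimately have "- B s \<in> A s"
    by simp
  moreover have "(1/l1) *\<^sub>R (zz - c) \<in> A c"
    unfolding c zz_def by (rule resolvent_inclusion[OF assms(1) \<open>0 < l1\<close>])
  ultimately have "0 \<le> inner (c - s) ((1/l1) *\<^sub>R (zz - c) + B s)"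
    using maximally_monotone_imp_monotone_op[OF assms(1)] by (force simp: monotone_op_def)
  moreover have "(1/l1) *\<^sub>R (zz - c) + B s = (1/l1) *\<^sub>R (zz - c + l1 *\<^sub>R B s)"
    using \<open>0 < l1\<close> by (simp add: algebra_simps)
  ultimately have "0 \<le> (1/l1) * inner (c - s) (zz - c + l1 *\<^sub>R B s)"
    by (simp only: inner_scaleR_right)
  then have "0 \<le> inner (c - s) (zz - c + l1 *\<^sub>R B s)"
    using \<open>0 < l1\<close> by (simp add: zero_le_divide_iff)
  moreover have "0 \<le> inner (c - s) (l1 *\<^sub>R (B c - B s))"
    using \<open>monotone_single B\<close> \<open>0 < l1\<close> by (simp add: monotone_single_def)
  moreover have "(zz - c + l1 *\<^sub>R B s) + l1 *\<^sub>R (B c - B s) = (b - c) + l1 *\<^sub>R (B c - B b) - l0 *\<^sub>R (B b - B a)"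
    by (simp add: zz_def algebra_simps)
  ultimately have mono: "0 \<le> inner (c - s) (b - c) + l1 * inner (c - s) (B c - B b) - l0 * inner (c - s) (B b - B a)"
    by (metis add_nonneg_nonneg inner_add_right inner_diff_right inner_scaleR_right)
  have polar: "2 * inner (c - s) (b - c) = norm (b - s)^2 - norm (c - s)^2 - norm (c - b)^2"
    by (simp add: power2_norm_eq_inner inner_simps inner_commute algebra_simps)
  have split: "inner (c - s) (B b - B a) = inner (b - s) (B b - B a) + inner (c - b) (B b - B a)"
    by (simp add: inner_diff_left)
  have "l0 * (2 * \<bar>inner (c - b) (B b - B a)\<bar>) \<le> l0 * (L * (norm (c - b)^2 + norm (b - a)^2))"
    using lipschitz_inner_le[OF Blip] \<open>0 \<le> l0\<close> by (rule mult_left_mono)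
  moreover have "- (l0 * inner (c - b) (B b - B a)) \<le> l0 * \<bar>inner (c - b) (B b - B a)\<bar>"
    using \<open>0 \<le> l0\<close> by (metis abs_ge_minus_self abs_mult abs_of_nonneg minus_mult_right)
  moreover have "0 \<le> (1 - l0 * L - l1 * L - 2 * \<epsilon>) * norm (c - b)^2"
    using assms(7,8) by simp
  ultimately show ?thesis
    using mono polar split unfolding frb_energy_def by (simp add: algebra_simps)
qed

section \<open>Convergence of the iteration\<close>

text \<open>The iterates are indexed from \<open>0\<close>: \<open>x n\<close> and \<open>lam n\<close> stand for \<open>x\<^sub>n\<^sub>-\<^sub>1\<close> and \<open>\<lambda>\<^sub>n\<^sub>-\<^sub>1\<close>
  of the theorem.\<close>

locale frb_iteration =
  fixes A :: "'a::{real_inner,complete_space} \<Rightarrow> 'a set" and B :: "'a \<Rightarrow> 'a"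
    and L \<epsilon> :: real and lam :: "nat \<Rightarrow> real" and x :: "nat \<Rightarrow> 'a"
  assumes maxmon: "maximally_monotone A"
    and Bmon: "monotone_single B"
    and Blip: "L-lipschitz_on UNIV B"
    and Lpos: "L > 0"
    and eps_pos: "\<epsilon> > 0"
    and lam_bounds: "\<And>n. \<epsilon> \<le> lam n \<and> lam n \<le> (1 - 2 * \<epsilon>) / (2 * L)"
    and iter: "\<And>n. x (Suc (Suc n)) = resolvent (lam (Suc n)) A
      (x (Suc n) - lam (Suc n) *\<^sub>R B (x (Suc n)) - lam n *\<^sub>R (B (x (Suc n)) - B (x n)))"
begin

lemma lam_pos: "lam n > 0"
  using lam_bounds[of n] eps_pos by linarith

lemma lam_times_L: "lam n * L \<le> (1 - 2 * \<epsilon>) / 2"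
proof -
  have "lam n * L \<le> (1 - 2 * \<epsilon>) / (2 * L) * L"
    using lam_bounds[of n] Lpos by (intro mult_right_mono) auto
  then show ?thesis
    using Lpos by simp
qed

lemma lam_times_L_half: "lam n * L \<le> 1/2"
proof -
  have "(1 - 2 * \<epsilon>) / 2 \<le> 1/2"
    using eps_pos by simp
  then show ?thesis
    using lam_times_L[of n] by linarith
qed

definition energy :: "'a \<Rightarrow> nat \<Rightarrow> real" where
  "energy s n = frb_energy B L s (lam n) (x n) (x (Suc n))"

context
  fixes s
  assumes zero: "s \<in> zeros_sum A B"
begin

lemma energy_Suc_le: "energy s (Suc n) + 2 * \<epsilon> * norm (x (Suc (Suc n)) - x (Suc n))^2 \<le> energy s n"
  unfolding energy_def
  using frb_energy_decrease[OF maxmon Bmon Blip zero _ lam_pos lam_times_L lam_times_L iter]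
    lam_pos[of n] by simp

lemma dist_sq_le_energy: "norm (x (Suc n) - s)^2 / 2 \<le> energy s n"
  unfolding energy_def using lam_pos[of n] by (intro frb_energy_lower_bound[OF Blip _ lam_times_L_half]) simp

lemma energy_decseq: "decseq (energy s)"
proof (rule decseq_SucI)
  fix n
  have "0 \<le> 2 * \<epsilon> * norm (x (Suc (Suc n)) - x (Suc n))^2"
    using eps_pos by simp
  then show "energy s (Suc n) \<le> energy s n"
    using energy_Suc_le[of n] by linarith
qed

lemma energy_convergent: "convergent (energy s)"
proof -
  have "0 \<le> energy s n" for n
    using dist_sq_le_energy[of n] zero_le_power2[of "norm (x (Suc n) - s)"] by linarith
  then obtain E where "energy s \<longlonglongrightarrow> E"
    using decseq_convergent[OF energy_decseq, of 0] by blast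
  then show ?thesis
    unfolding convergent_def by blast
qed

lemma steps_tendsto_zero: "(\<lambda>n. norm (x (Suc n) - x n)) \<longlonglongrightarrow> 0"
proof -
  obtain E where E: "energy s \<longlonglongrightarrow> E"
    using energy_convergent unfolding convergent_def by blast
  have "(\<lambda>n. norm (x (Suc (Suc n)) - x (Suc n))^2) \<longlonglongrightarrow> 0"
  proof (rule Lim_null_comparison)
    have "norm (x (Suc (Suc n)) - x (Suc n))^2 \<le> (energy s n - energy s (Suc n)) / (2 * \<epsilon>)" for n
      using energy_Suc_le[of n] eps_pos by (simp add: pos_le_divide_eq mult.commute)
    then show "\<forall>\<^sub>F n in sequentially. norm (norm (x (Suc (Suc n)) - x (Suc n))^2) \<le> (energy s n - energy s (Suc n)) / (2 * \<epsilon>)"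
      by simp
    have "(\<lambda>n. (energy s n - energy s (Suc n)) / (2 * \<epsilon>)) \<longlonglongrightarrow> (E - E) / (2 * \<epsilon>)"
      using E LIMSEQ_Suc[OF E] by (intro tendsto_divide tendsto_diff tendsto_const) (use eps_pos in auto)
    then show "(\<lambda>n. (energy s n - energy s (Suc n)) / (2 * \<epsilon>)) \<longlonglongrightarrow> 0"
      by simp
  qed
  then have "(\<lambda>n. sqrt (norm (x (Suc (Suc n)) - x (Suc n))^2)) \<longlonglongrightarrow> sqrt 0"
    by (rule tendsto_real_sqrt)
  then have "(\<lambda>n. norm (x (Suc (Suc n)) - x (Suc n))) \<longlonglongrightarrow> 0"
    by simp
  then show ?thesis
    by (rule LIMSEQ_imp_Suc)
qed

lemma dist_bounded: "norm (x (Suc n) - s) \<le> sqrt (2 * energy s 0)"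
proof -
  have "energy s n \<le> energy s 0"
    using energy_decseq by (simp add: decseq_def)
  then show ?thesis
    using dist_sq_le_energy[of n] by (intro real_le_rsqrt) linarith
qed

lemma dist_convergent: "convergent (\<lambda>n. norm (x (Suc n) - s))"
proof -
  obtain E where E: "energy s \<longlonglongrightarrow> E"
    using energy_convergent unfolding convergent_def by blast
  define R where "R = sqrt (2 * energy s 0)"
  have "(\<lambda>n. energy s n - norm (x (Suc n) - s)^2) \<longlonglongrightarrow> 0"
  proof (rule Lim_null_comparison)
    show "\<forall>\<^sub>F n in sequentially. norm (energy s n - norm (x (Suc n) - s)^2)
        \<le> R * norm (x (Suc n) - x n) + norm (x (Suc n) - x n)^2"
    proof (intro always_eventually allI)
      fix n
      have "norm (x (Suc n) - s) * norm (x (Suc n) - x n) \<le> R * norm (x (Suc n) - x n)"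
        using dist_bounded[of n] by (simp add: R_def mult_right_mono)
      then show "norm (energy s n - norm (x (Suc n) - s)^2) \<le> R * norm (x (Suc n) - x n) + norm (x (Suc n) - x n)^2"
        using frb_energy_dist_sq_diff[OF Blip _ lam_times_L_half, of n s "x n" "x (Suc n)"] lam_pos[of n]
        unfolding energy_def real_norm_def by linarith
    qed
    show "(\<lambda>n. R * norm (x (Suc n) - x n) + norm (x (Suc n) - x n)^2) \<longlonglongrightarrow> 0"
      using tendsto_add[OF tendsto_mult_right_zero[OF steps_tendsto_zero] tendsto_power[OF steps_tendsto_zero, of 2]]
      by simp
  qed
  then have "(\<lambda>n. energy s n - (energy s n - norm (x (Suc n) - s)^2)) \<longlonglongrightarrow> E - 0"
    by (intro tendsto_diff E)
  then have "(\<lambda>n. sqrt (norm (x (Suc n) - s)^2)) \<longlonglongrightarrow> sqrt E"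
    by (intro tendsto_real_sqrt) simp
  then show ?thesis
    unfolding convergent_def by auto
qed

end

definition residual :: "nat \<Rightarrow> 'a" where
  "residual n = (1 / lam (Suc n)) *\<^sub>R (x (Suc n) - x (Suc (Suc n))) + (B (x (Suc (Suc n))) - B (x (Suc n)))
    - (lam n / lam (Suc n)) *\<^sub>R (B (x (Suc n)) - B (x n))"

lemma residual_in_graph: "residual n - B (x (Suc (Suc n))) \<in> A (x (Suc (Suc n)))"
proof -
  define z where "z = x (Suc n) - lam (Suc n) *\<^sub>R B (x (Suc n)) - lam n *\<^sub>R (B (x (Suc n)) - B (x n))"
  have "x (Suc (Suc n)) = resolvent (lam (Suc n)) A z"
    unfolding z_def by (rule iter)
  moreover have "(1 / lam (Suc n)) *\<^sub>R (z - x (Suc (Suc n))) = residual n - B (x (Suc (Suc n)))"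
    using lam_pos[of "Suc n"] unfolding residual_def z_def by (simp add: algebra_simps)
  ultimately show ?thesis
    using resolvent_inclusion[OF maxmon lam_pos, of "Suc n" z] by simp
qed

lemma norm_residual_le:
  "norm (residual n) \<le> (1/\<epsilon> + L) * norm (x (Suc (Suc n)) - x (Suc n)) + (1/(2*\<epsilon>)) * norm (x (Suc n) - x n)"
proof -
  define d where "d n = norm (x (Suc n) - x n)" for n
  have lip: "norm (B u - B v) \<le> L * norm (u - v)" for u v
    using Blip by (auto simp: lipschitz_on_def dist_norm)
  have inv: "1 / lam (Suc n) \<le> 1 / \<epsilon>"
    using lam_bounds[of "Suc n"] eps_pos by (simp add: frac_le)
  have "(1 / lam (Suc n)) * d (Suc n) \<le> (1/\<epsilon>) * d (Suc n)"
    using inv by (rule mult_right_mono) (simp add: d_def)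
  then have t1: "norm ((1 / lam (Suc n)) *\<^sub>R (x (Suc n) - x (Suc (Suc n)))) \<le> (1/\<epsilon>) * d (Suc n)"
    using lam_pos[of "Suc n"] by (simp add: d_def norm_minus_commute)
  have t2: "norm (B (x (Suc (Suc n))) - B (x (Suc n))) \<le> L * d (Suc n)"
    unfolding d_def by (rule lip)
  have "norm ((lam n / lam (Suc n)) *\<^sub>R (B (x (Suc n)) - B (x n)))
      = (lam n / lam (Suc n)) * norm (B (x (Suc n)) - B (x n))"
    using lam_pos[of n] lam_pos[of "Suc n"] by simp
  also have "\<dots> \<le> (lam n / lam (Suc n)) * (L * d n)"
    using lam_pos[of n] lam_pos[of "Suc n"] unfolding d_def by (intro mult_left_mono lip) auto
  also have "\<dots> = (lam n * L) * (1 / lam (Suc n)) * d n"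
    by simp
  also have "\<dots> \<le> (1/2) * (1/\<epsilon>) * d n"
    using lam_times_L_half[of n] inv lam_pos[of n] lam_pos[of "Suc n"] Lpos
    by (intro mult_right_mono mult_mono) (auto simp: d_def)
  finally have t3: "norm ((lam n / lam (Suc n)) *\<^sub>R (B (x (Suc n)) - B (x n))) \<le> (1/(2*\<epsilon>)) * d n"
    by simp
  have "norm (residual n) \<le> norm ((1 / lam (Suc n)) *\<^sub>R (x (Suc n) - x (Suc (Suc n))) + (B (x (Suc (Suc n))) - B (x (Suc n))))
      + norm ((lam n / lam (Suc n)) *\<^sub>R (B (x (Suc n)) - B (x n)))"
    unfolding residual_def by (rule norm_triangle_ineq4)
  also have "\<dots> \<le> norm ((1 / lam (Suc n)) *\<^sub>R (x (Suc n) - x (Suc (Suc n)))) + norm (B (x (Suc (Suc n))) - B (x (Suc n)))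
      + norm ((lam n / lam (Suc n)) *\<^sub>R (B (x (Suc n)) - B (x n)))"
    by (rule add_right_mono[OF norm_triangle_ineq])
  finally show ?thesis
    using t1 t2 t3 by (simp add: d_def algebra_simps)
qed

lemma residual_tendsto_zero:
  assumes "zeros_sum A B \<noteq> {}"
  shows "residual \<longlonglongrightarrow> 0"
proof (rule Lim_null_comparison)
  obtain s where "s \<in> zeros_sum A B"
    using assms by blast
  define d where "d n = norm (x (Suc n) - x n)" for n
  have d: "d \<longlonglongrightarrow> 0"
    unfolding d_def by (rule steps_tendsto_zero[OF \<open>s \<in> zeros_sum A B\<close>])
  show "\<forall>\<^sub>F n in sequentially. norm (residual n) \<le> (1/\<epsilon> + L) * d (Suc n) + (1/(2*\<epsilon>)) * d n"
    using norm_residual_le by (simp add: d_def)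
  have "(\<lambda>n. (1/\<epsilon> + L) * d (Suc n) + (1/(2*\<epsilon>)) * d n) \<longlonglongrightarrow> (1/\<epsilon> + L) * 0 + (1/(2*\<epsilon>)) * 0"
    by (intro tendsto_intros LIMSEQ_Suc[OF d] d)
  then show "(\<lambda>n. (1/\<epsilon> + L) * d (Suc n) + (1/(2*\<epsilon>)) * d n) \<longlonglongrightarrow> 0"
    by simp
qed

lemma weak_cluster_point_in_zeros:
  assumes "zeros_sum A B \<noteq> {}" and "strict_mono r"
    and "weakly_converges_to ((\<lambda>n. x (Suc (Suc n))) \<circ> r) q"
  shows "q \<in> zeros_sum A B"
proof (rule zeros_sum_weak_strong_closed[OF maxmon Bmon Blip Lpos])
  obtain s where "s \<in> zeros_sum A B"
    using assms by blast
  show "residual (r j) - B (x (Suc (Suc (r j)))) \<in> A (x (Suc (Suc (r j))))" for j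
    by (rule residual_in_graph)
  show "(\<lambda>j. residual (r j)) \<longlonglongrightarrow> 0"
    using LIMSEQ_subseq_LIMSEQ[OF residual_tendsto_zero[OF assms(1)] assms(2)] by (simp add: o_def)
  have "norm (x (Suc (Suc n))) \<le> sqrt (2 * energy s 0) + norm s" for n
    using dist_bounded[OF \<open>s \<in> zeros_sum A B\<close>, of "Suc n"] norm_triangle_sub[of "x (Suc (Suc n))" s]
    by linarith
  then show "bounded (range (\<lambda>j. x (Suc (Suc (r j)))))"
    unfolding bounded_iff by blast
  show "weakly_converges_to (\<lambda>j. x (Suc (Suc (r j)))) q"
    using assms(3) by (simp add: o_def)
qed

theorem weakly_convergent:
  assumes "zeros_sum A B \<noteq> {}"
  shows "\<exists>p\<in>zeros_sum A B. weakly_converges_to (\<lambda>n. x (Suc n)) p"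
proof -
  have conv: "convergent (\<lambda>n. norm (x (Suc (Suc n)) - s))" if "s \<in> zeros_sum A B" for s
    using dist_convergent[OF that] convergent_Suc_iff[of "\<lambda>n. norm (x (Suc n) - s)"] by simp
  have "\<exists>p\<in>zeros_sum A B. weakly_converges_to (\<lambda>n. x (Suc (Suc n))) p"
  proof (rule Opial[OF assms])
    show "convergent (\<lambda>n. norm (x (Suc (Suc n)) - s))" if "s \<in> zeros_sum A B" for s
      by (rule conv[OF that])
    show "q \<in> zeros_sum A B"
      if "strict_mono r" and "weakly_converges_to ((\<lambda>n. x (Suc (Suc n))) \<circ> r) q" for r q
      by (rule weak_cluster_point_in_zeros[OF assms that])
  qed
  then obtain p where "p \<in> zeros_sum A B" and "weakly_converges_to (\<lambda>n. x (Suc (Suc n))) p"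
    by blast
  then have "weakly_converges_to (\<lambda>n. x (Suc n)) p"
    unfolding weakly_converges_to_def by (blast intro: LIMSEQ_imp_Suc)
  with \<open>p \<in> zeros_sum A B\<close> show ?thesis
    by blast
qed

end

theorem theorem2p5:
  fixes A :: "'a::{real_inner, complete_space} \<Rightarrow> 'a set"
    and B :: "'a \<Rightarrow> 'a"
    and L \<epsilon> :: real
    and lam :: "int \<Rightarrow> real"
    and x :: "int \<Rightarrow> 'a"
  assumes maxmon: "maximally_monotone A"
    and Bmon: "monotone_single B"
    and Blip: "L-lipschitz_on UNIV B"
    and Lpos: "L > 0"
    and zeros_ne: "zeros_sum A B \<noteq> {}"
    and eps_pos: "\<epsilon> > 0"
    and lam_bounds: "\<And>k. k \<ge> -1 \<Longrightarrow> \<epsilon> \<le> lam k \<and> lam k \<le> (1 - 2 * \<epsilon>) / (2 * L)"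
    and iter: "\<And>k. k \<ge> 0 \<Longrightarrow>
      x (k + 1) = resolvent (lam k) A
        (x k - lam k *\<^sub>R B (x k) - lam (k - 1) *\<^sub>R (B (x k) - B (x (k - 1))))"
  shows "\<exists>p \<in> zeros_sum A B. weakly_converges_to (\<lambda>n. x (int n)) p"
proof -
  define X where "X n = x (int n - 1)" for n
  define Lm where "Lm n = lam (int n - 1)" for n
  have "\<epsilon> \<le> Lm n \<and> Lm n \<le> (1 - 2 * \<epsilon>) / (2 * L)" for n
    unfolding Lm_def by (rule lam_bounds) simp
  moreover have "X (Suc (Suc n)) = resolvent (Lm (Suc n)) A
      (X (Suc n) - Lm (Suc n) *\<^sub>R B (X (Suc n)) - Lm n *\<^sub>R (B (X (Suc n)) - B (X n)))" for n
    using iter[of "int n"] by (simp add: X_def Lm_def add.commute)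
  ultimately interpret frb_iteration A B L \<epsilon> Lm X
    using maxmon Bmon Blip Lpos eps_pos by unfold_locales
  have "(\<lambda>n. X (Suc n)) = (\<lambda>n. x (int n))"
    by (simp add: X_def)
  then show ?thesis
    using weakly_convergent[OF zeros_ne] by simp
qed

end
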